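(* Let $0<\alpha<1$ and let $p:\mathbb{R}\to\mathbb{R}$ be Lipschitz-continuous with $p_2\le p(t)\le p_1<0$ for all $t\in\mathbb{R}$, for some constants $p_2\le p_1<0$. For every $n\in\mathbb{N}$ there exists $\gamma_n>0$ such that, for all real $t_0$ and $v_0>\gamma_n$, the unique bouncing solution $u$ of $\ddot u-\frac{1}{u^\alpha}=p(t)$ with $u(t_0)=0$ and $\dot u(t_0^+)=v_0$, continued forward in time by reflecting the velocity at each collision, has at least $n$ impacts (zeros) with the singularity $u=0$ after $t_0$.
   Context: Let $\eta=((\alpha-1)p_1)^{-1/\alpha}$. For any $s$ and any $w>\sqrt{2(p_1-p_2)\eta}$ there is a unique maximal solution of the equation on an interval $(s,s')$, $s'<\infty$, with $u(t)\to0$ as $t\to s^+$ and $t\to s'^-$, $\dot u(s^+)=w$ and finite $\dot u(s'^-)<0$. A bouncing solution is a continuous function $u\ge0$ such that its zero set $Z$ is discrete, $u$ is $C^2$ and solves the equation on each open interval disjoint from $Z$, and at each $t_*\in Z$ the one-sided limits $\dot u(t_*^\pm)$ exist with $\dot u(t_*^+)=-\dot u(t_*^-)$ (elastic collision). The forward continuation from $(t_0,v_0)$ concatenates such maximal solutions, restarting at each collision time $t_*$ with velocity $-\dot u(t_*^-)$, as long as this velocity exceeds $\sqrt{2(p_1-p_2)\eta}$. *)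

theory Defs
  imports "HOL-Analysis.Analysis"
begin

definition eta :: "real \<Rightarrow> real \<Rightarrow> real" where
  "eta \<alpha> p1 = ((\<alpha> - 1) * p1) powr (- 1 / \<alpha>)"

definition vel_threshold :: "real \<Rightarrow> real \<Rightarrow> real \<Rightarrow> real" where
  "vel_threshold \<alpha> p1 p2 = sqrt (2 * (p1 - p2) * eta \<alpha> p1)"

definition solves_on :: "real \<Rightarrow> (real \<Rightarrow> real) \<Rightarrow> (real \<Rightarrow> real) \<Rightarrow> (real \<Rightarrow> real) \<Rightarrow> real \<Rightarrow> real \<Rightarrow> bool" where
  "solves_on \<alpha> p u du a b \<longleftrightarrow>
     (\<forall>s\<in>{a<..<b}. u s > 0 \<and> (u has_real_derivative du s) (at s) \<and>
        (du has_real_derivative (p s + 1 / (u s powr \<alpha>))) (at s))"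

text \<open>The forward continuation (bouncing solution) starting at time t0 with u(t0) = 0,
  du(t0+) = v0, performs (at least) n impacts: there are collision times
  t0 = t 0 < t 1 < ... < t n, on each (t k, t (k+1)) u is a positive solution,
  u vanishes at each t k, the one-sided velocity limits exist, the impacts are
  elastic, and each restart velocity exceeds the threshold (so that the
  continuation goes on).\<close>
definition bounces_n_times ::
  "real \<Rightarrow> real \<Rightarrow> real \<Rightarrow> (real \<Rightarrow> real) \<Rightarrow> real \<Rightarrow> real \<Rightarrow> nat
    \<Rightarrow> (real \<Rightarrow> real) \<Rightarrow> (real \<Rightarrow> real) \<Rightarrow> (nat \<Rightarrow> real) \<Rightarrow> bool" where
  "bounces_n_times \<alpha> p1 p2 p t0 v0 n u du t \<longleftrightarrow>
     t 0 = t0 \<and>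
     (\<forall>k<n. t k < t (Suc k)) \<and>
     continuous_on {t 0..t n} u \<and>
     (\<forall>k\<le>n. u (t k) = 0) \<and>
     (\<forall>k<n. solves_on \<alpha> p u du (t k) (t (Suc k))) \<and>
     (du \<longlongrightarrow> v0) (at_right (t 0)) \<and>
     (\<forall>k\<in>{1..n}. \<exists>w. w < 0 \<and> (du \<longlongrightarrow> w) (at_left (t k)) \<and>
        (k < n \<longrightarrow> (du \<longlongrightarrow> - w) (at_right (t k)) \<and> - w > vel_threshold \<alpha> p1 p2))"

end

theory Submission
  imports Defs
begin

text \<open>Write \<open>u = z powr k\<close> with \<open>k = 3 / (1 - \<alpha>)\<close> and change time by \<open>dt = z powr (k - 1) d\<tau>\<close>.
  With \<open>w = u'\<close> the singular equation becomes a regular autonomous system in \<open>(t, z, w)\<close> which,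
  after clamping \<open>z\<close>, is globally Lipschitz, so Picard iteration solves it; changing time back
  turns the arc of such an orbit between two zeros of \<open>z\<close> into a flight.

  For a take-off speed \<open>v\<close>, the energy \<open>w\<^sup>2 / 2 - z\<^sup>3 / (1 - \<alpha>) - p2 z powr k\<close> does not
  decrease on the way up, so the apex satisfies \<open>-p2 z powr k \<ge> v\<^sup>2 / 2\<close>; the energy with \<open>p1\<close> in
  place of \<open>p2\<close> does not decrease on the way down, so the flight lands with speed at least
  \<open>v sqrt (p1 / p2) / 2\<close>. Landing speeds are therefore as large as we like once \<open>v\<close> is large, and
  \<open>n\<close> impacts follow by induction: the threshold for \<open>n + 1\<close> impacts is a take-off speed whose
  flight lands faster than both the threshold for \<open>n\<close> impacts and the restart threshold.\<close>

section \<open>Global solutions of Lipschitz autonomous equations\<close>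

fun picard_iter :: "('a::banach \<Rightarrow> 'a) \<Rightarrow> 'a \<Rightarrow> nat \<Rightarrow> real \<Rightarrow> 'a" where
  "picard_iter F x0 0 s = x0"
| "picard_iter F x0 (Suc n) s = x0 + integral {0..s} (\<lambda>r. F (picard_iter F x0 n r))"

lemma has_integral_power_div_fact:
  fixes B L s :: real
  assumes "0 \<le> s"
  shows "((\<lambda>r. L * (B * (L * r) ^ n / fact n)) has_integral B * (L * s) ^ Suc n / fact (Suc n)) {0..s}"
proof -
  have "((\<lambda>r. L * (B * (L * r) ^ n / fact n)) has_integral
      B * (L * s) ^ Suc n / fact (Suc n) - B * (L * 0) ^ Suc n / fact (Suc n)) {0..s}"
  proof (rule fundamental_theorem_of_calculus[OF assms])
    fix r :: real
    define C where "C = B * L ^ Suc n / fact (Suc n)"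
    have "((\<lambda>r. C * r ^ Suc n) has_real_derivative C * (real (Suc n) * r ^ n)) (at r within {0..s})"
      using DERIV_pow[of "Suc n" r] by (intro DERIV_cmult) simp
    moreover have "(\<lambda>r. C * r ^ Suc n) = (\<lambda>r. B * (L * r) ^ Suc n / fact (Suc n))"
      by (auto simp: C_def power_mult_distrib)
    moreover have "C * (real (Suc n) * r ^ n) = L * (B * (L * r) ^ n / fact n)"
      by (simp add: C_def power_mult_distrib del: of_nat_Suc)
    ultimately show "((\<lambda>r. B * (L * r) ^ Suc n / fact (Suc n)) has_vector_derivative
        L * (B * (L * r) ^ n / fact n)) (at r within {0..s})"
      by (simp add: has_real_derivative_iff_has_vector_derivative)
  qed
  then show ?thesis by simp
qed

locale picard =
  fixes F :: "'a::banach \<Rightarrow> 'a" and x0 :: 'a and L :: real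
  assumes lipschitz: "L-lipschitz_on UNIV F"
begin

lemma L_nonneg: "0 \<le> L"
  using lipschitz by (rule lipschitz_on_nonneg)

lemma norm_F_diff_le: "norm (F x - F y) \<le> L * norm (x - y)"
  using lipschitz by (rule lipschitz_on_normD) auto

lemma continuous_on_F: "continuous_on A F"
  using lipschitz_on_continuous_on[OF lipschitz] continuous_on_subset by blast

lemma continuous_on_picard_iter: "continuous_on {0..S} (picard_iter F x0 n)"
proof (induction n)
  case (Suc n)
  have "continuous_on {0..S} (\<lambda>r. F (picard_iter F x0 n r))"
    by (rule continuous_on_compose2[OF continuous_on_F Suc]) auto
  then show ?case
    by (simp only: picard_iter.simps)
       (intro continuous_on_add continuous_on_const indefinite_integral_continuous_1 integrable_continuous_real)
qed simp

lemma picard_iter_integrable: "(\<lambda>r. F (picard_iter F x0 n r)) integrable_on {0..s}"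
  by (intro integrable_continuous_real continuous_on_compose2[OF continuous_on_F continuous_on_picard_iter]) auto

lemma norm_picard_iter_step_le:
  assumes "s \<in> {0..S}"
  shows "norm (picard_iter F x0 (Suc n) s - picard_iter F x0 n s) \<le> S * norm (F x0) * (L * s) ^ n / fact n"
  using assms
proof (induction n arbitrary: s)
  case 0
  then show ?case by (simp add: mult_right_mono)
next
  case (Suc n)
  define B where "B = S * norm (F x0)"
  have s: "0 \<le> s"
    using Suc.prems by simp
  have "picard_iter F x0 (Suc (Suc n)) s - picard_iter F x0 (Suc n) s
      = integral {0..s} (\<lambda>r. F (picard_iter F x0 (Suc n) r) - F (picard_iter F x0 n r))"
    by (simp add: integral_diff picard_iter_integrable del: picard_iter.simps(2)) simp
  also have "norm \<dots> \<le> integral {0..s} (\<lambda>r. L * (B * (L * r) ^ n / fact n))"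
  proof (rule integral_norm_bound_integral)
    show "(\<lambda>r. F (picard_iter F x0 (Suc n) r) - F (picard_iter F x0 n r)) integrable_on {0..s}"
      by (intro integrable_diff picard_iter_integrable)
    show "(\<lambda>r. L * (B * (L * r) ^ n / fact n)) integrable_on {0..s}"
      using has_integral_power_div_fact[OF s] by (rule has_integral_integrable)
    fix r assume r: "r \<in> {0..s}"
    have "norm (F (picard_iter F x0 (Suc n) r) - F (picard_iter F x0 n r))
        \<le> L * norm (picard_iter F x0 (Suc n) r - picard_iter F x0 n r)"
      by (rule norm_F_diff_le)
    also have "\<dots> \<le> L * (B * (L * r) ^ n / fact n)"
      using Suc r L_nonneg by (intro mult_left_mono) (auto simp: B_def)
    finally show "norm (F (picard_iter F x0 (Suc n) r) - F (picard_iter F x0 n r)) \<le> L * (B * (L * r) ^ n / fact n)" .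
  qed
  also have "\<dots> = B * (L * s) ^ Suc n / fact (Suc n)"
    using has_integral_power_div_fact[OF s] by (rule integral_unique)
  finally show ?case by (simp add: B_def)
qed

lemma uniformly_convergent_picard_iter:
  assumes "0 \<le> S"
  shows "uniformly_convergent_on {0..S} (picard_iter F x0)"
proof -
  define M where "M i = S * norm (F x0) * (L * S) ^ i / fact i" for i
  have "summable (\<lambda>i. S * norm (F x0) * (inverse (fact i) * (L * S) ^ i))"
    by (intro summable_mult summable_exp)
  moreover have "(\<lambda>i. S * norm (F x0) * (inverse (fact i) * (L * S) ^ i)) = M"
    by (auto simp: M_def divide_inverse)
  ultimately have "summable M"
    by simp
  then have "uniformly_convergent_on {0..S}
      (\<lambda>n s. \<Sum>i<n. picard_iter F x0 (Suc i) s - picard_iter F x0 i s)"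
  proof (rule Weierstrass_m_test'[rotated])
    fix i s assume s: "s \<in> {0..S}"
    have "norm (picard_iter F x0 (Suc i) s - picard_iter F x0 i s) \<le> S * norm (F x0) * (L * s) ^ i / fact i"
      using norm_picard_iter_step_le[OF s] .
    also have "\<dots> \<le> M i"
      unfolding M_def using s assms L_nonneg
      by (intro divide_right_mono mult_left_mono power_mono) auto
    finally show "norm (picard_iter F x0 (Suc i) s - picard_iter F x0 i s) \<le> M i" .
  qed
  then obtain l where "uniform_limit {0..S}
      (\<lambda>n s. \<Sum>i<n. picard_iter F x0 (Suc i) s - picard_iter F x0 i s) l sequentially"
    unfolding uniformly_convergent_on_def by blast
  then have "uniform_limit {0..S}
      (\<lambda>n s. x0 + (\<Sum>i<n. picard_iter F x0 (Suc i) s - picard_iter F x0 i s)) (\<lambda>s. x0 + l s) sequentially"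
    by (intro uniform_limit_add uniform_limit_const)
  moreover have "(\<lambda>n s. x0 + (\<Sum>i<n. picard_iter F x0 (Suc i) s - picard_iter F x0 i s)) = picard_iter F x0"
    by (auto simp: sum_lessThan_telescope[of "\<lambda>i. picard_iter F x0 i _"] simp del: picard_iter.simps(2))
  ultimately show ?thesis
    unfolding uniformly_convergent_on_def by auto
qed

definition "picard_limit s = lim (\<lambda>n. picard_iter F x0 n s)"

lemma uniform_limit_picard_iter:
  "0 \<le> S \<Longrightarrow> uniform_limit {0..S} (picard_iter F x0) picard_limit sequentially"
  using uniformly_convergent_picard_iter
  by (simp add: uniformly_convergent_uniform_limit_iff picard_limit_def[abs_def])

lemma continuous_on_picard_limit: "continuous_on {0..S} picard_limit"
proof (cases "0 \<le> S")
  case True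
  show ?thesis
    by (rule uniform_limit_theorem[OF always_eventually uniform_limit_picard_iter[OF True]])
       (auto intro: continuous_on_picard_iter)
qed simp

lemma picard_iter_tendsto: "0 \<le> s \<Longrightarrow> (\<lambda>n. picard_iter F x0 n s) \<longlonglongrightarrow> picard_limit s"
  by (rule tendsto_uniform_limitI[OF uniform_limit_picard_iter]) auto

lemma picard_limit_0: "picard_limit 0 = x0"
proof -
  have "picard_iter F x0 n 0 = x0" for n
    by (cases n) auto
  then show ?thesis
    using picard_iter_tendsto[of 0] by (simp add: LIMSEQ_const_iff)
qed

lemma picard_limit_eq_integral:
  assumes s: "0 \<le> s"
  shows "picard_limit s = x0 + integral {0..s} (\<lambda>r. F (picard_limit r))"
proof -
  have "uniform_limit {0..s} (\<lambda>n r. F (picard_iter F x0 n r)) (\<lambda>r. F (picard_limit r)) sequentially"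
  proof (rule uniform_limitI)
    fix e :: real assume "0 < e"
    then have "0 < e / (L + 1)" using L_nonneg by simp
    with uniform_limit_picard_iter[OF s]
    show "\<forall>\<^sub>F n in sequentially. \<forall>r\<in>{0..s}. dist (F (picard_iter F x0 n r)) (F (picard_limit r)) < e"
    proof (rule uniform_limitD[THEN eventually_mono], intro ballI)
      fix n r assume "\<forall>r\<in>{0..s}. dist (picard_iter F x0 n r) (picard_limit r) < e / (L + 1)" "r \<in> {0..s}"
      then have "L * dist (picard_iter F x0 n r) (picard_limit r) \<le> L * (e / (L + 1))"
        using L_nonneg by (intro mult_left_mono) (auto intro: less_imp_le)
      also have "\<dots> < e" using \<open>0 < e\<close> L_nonneg by (simp add: field_simps)
      finally show "dist (F (picard_iter F x0 n r)) (F (picard_limit r)) < e"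
        using norm_F_diff_le[of "picard_iter F x0 n r" "picard_limit r"] by (simp add: dist_norm)
    qed
  qed
  then obtain I J where I: "\<And>n. ((\<lambda>r. F (picard_iter F x0 n r)) has_integral I n) {0..s}"
    and J: "((\<lambda>r. F (picard_limit r)) has_integral J) {0..s}" and "I \<longlonglongrightarrow> J"
    by (rule uniform_limit_integral)
       (auto intro: continuous_on_compose2[OF continuous_on_F continuous_on_picard_iter])
  then have "(\<lambda>n. picard_iter F x0 (Suc n) s) \<longlonglongrightarrow> x0 + J"
    using integral_unique[OF I] by (simp add: tendsto_add)
  moreover have "(\<lambda>n. picard_iter F x0 (Suc n) s) \<longlonglongrightarrow> picard_limit s"
    using picard_iter_tendsto[OF s] by (rule LIMSEQ_Suc)
  ultimately have "picard_limit s = x0 + J"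
    using LIMSEQ_unique by blast
  then show ?thesis
    using J by (simp add: integral_unique)
qed

lemma picard_limit_has_vector_derivative:
  assumes t: "0 < t"
  shows "(picard_limit has_vector_derivative F (picard_limit t)) (at t)"
proof -
  have "continuous_on {0..t + 1} (\<lambda>r. F (picard_limit r))"
    by (rule continuous_on_compose2[OF continuous_on_F continuous_on_picard_limit]) auto
  from integral_has_vector_derivative[OF this, of t] t
  have "((\<lambda>s. integral {0..s} (\<lambda>r. F (picard_limit r))) has_vector_derivative F (picard_limit t)) (at t)"
    by (simp add: at_within_Icc_at)
  then have "((\<lambda>s. x0 + integral {0..s} (\<lambda>r. F (picard_limit r))) has_vector_derivative F (picard_limit t)) (at t)"
    using has_vector_derivative_add[OF has_vector_derivative_const] by fastforce
  then show ?thesis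
    by (rule has_vector_derivative_transform_within_open[of _ _ _ "{0<..}"])
       (use t picard_limit_eq_integral in auto)
qed

end

lemma lipschitz_autonomous_ode_solution:
  fixes F :: "'a::banach \<Rightarrow> 'a" and x0 :: 'a
  assumes "L-lipschitz_on UNIV F"
  obtains x where "x 0 = x0" "\<And>S. continuous_on {0..S} x"
    "\<And>t. 0 < t \<Longrightarrow> (x has_vector_derivative F (x t)) (at t)"
proof -
  interpret picard F x0 L by (rule picard.intro) fact
  show ?thesis
    by (rule that[OF picard_limit_0 continuous_on_picard_limit picard_limit_has_vector_derivative])
qed

lemma first_crossing_up:
  fixes f :: "real \<Rightarrow> real"
  assumes "a \<le> b" and cont: "continuous_on {a..b} f" and "f a < c" "c \<le> f b"
  obtains \<tau> where "a < \<tau>" "\<tau> \<le> b" "f \<tau> = c" "\<And>s. a \<le> s \<Longrightarrow> s < \<tau> \<Longrightarrow> f s < c"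
proof -
  define K where "K = {s \<in> {a..b}. c \<le> f s}"
  have "closed K"
    unfolding K_def by (rule continuous_on_closed_Collect_le) (auto intro: cont)
  moreover have "b \<in> K" "bdd_below K"
    using assms by (auto simp: K_def intro: bdd_belowI[of _ a])
  ultimately have \<tau>K: "Inf K \<in> K"
    by (intro closed_contains_Inf) auto
  have below: "f s < c" if "a \<le> s" "s < Inf K" for s
  proof (rule ccontr)
    assume "\<not> f s < c"
    then have "s \<in> K" using that \<tau>K by (auto simp: K_def)
    then show False using that \<open>bdd_below K\<close> cInf_lower by fastforce
  qed
  have \<tau>: "a \<le> Inf K" "Inf K \<le> b" "c \<le> f (Inf K)"
    using \<tau>K by (auto simp: K_def)
  then obtain x where x: "a \<le> x" "x \<le> Inf K" "f x = c"
    using IVT'[of f a c "Inf K"] assms continuous_on_subset[OF cont] by auto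
  then have "x = Inf K"
    using below[of x] by force
  with x \<tau> below assms show ?thesis
    by (intro that[of "Inf K"]) (auto simp: le_less)
qed

lemma first_crossing_down:
  fixes f :: "real \<Rightarrow> real"
  assumes "a \<le> b" "continuous_on {a..b} f" "c < f a" "f b \<le> c"
  obtains \<tau> where "a < \<tau>" "\<tau> \<le> b" "f \<tau> = c" "\<And>s. a \<le> s \<Longrightarrow> s < \<tau> \<Longrightarrow> c < f s"
proof -
  obtain \<tau> where "a < \<tau>" "\<tau> \<le> b" "- f \<tau> = - c" "\<And>s. a \<le> s \<Longrightarrow> s < \<tau> \<Longrightarrow> - f s < - c"
    by (rule first_crossing_up[of a b "\<lambda>x. - f x" "- c"]) (use assms in \<open>auto intro: continuous_intros\<close>)
  then show ?thesis
    by (intro that[of \<tau>]) auto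
qed

lemma DERIV_ge_imp_diff_ge:
  fixes f f' :: "real \<Rightarrow> real"
  assumes "a \<le> b" "continuous_on {a..b} f"
    and "\<And>x. a < x \<Longrightarrow> x < b \<Longrightarrow> (f has_real_derivative f' x) (at x)"
    and "\<And>x. a < x \<Longrightarrow> x < b \<Longrightarrow> m \<le> f' x"
  shows "m * (b - a) \<le> f b - f a"
proof -
  have "f a - m * a \<le> f b - m * b"
  proof (rule DERIV_nonneg_imp_increasing_open[of a b "\<lambda>x. f x - m * x"])
    fix x assume "a < x" "x < b"
    then show "\<exists>y. ((\<lambda>x. f x - m * x) has_real_derivative y) (at x) \<and> 0 \<le> y"
      using assms by (intro exI[of _ "f' x - m"]) (auto intro!: derivative_eq_intros)
  qed (use assms in \<open>auto intro!: continuous_intros\<close>)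
  then show ?thesis
    by (simp add: algebra_simps)
qed

lemma DERIV_le_imp_diff_le:
  fixes f f' :: "real \<Rightarrow> real"
  assumes "a \<le> b" "continuous_on {a..b} f"
    and "\<And>x. a < x \<Longrightarrow> x < b \<Longrightarrow> (f has_real_derivative f' x) (at x)"
    and "\<And>x. a < x \<Longrightarrow> x < b \<Longrightarrow> f' x \<le> m"
  shows "f b - f a \<le> m * (b - a)"
proof -
  have "- m * (b - a) \<le> - f b - - f a"
    by (rule DERIV_ge_imp_diff_ge[of a b _ "\<lambda>x. - f' x"])
       (use assms in \<open>auto intro!: derivative_eq_intros continuous_intros\<close>)
  then show ?thesis
    by simp
qed

lemma le_powr_of_root_le:
  fixes c e z :: real
  assumes "0 < c" "0 < e" "c powr (1 / e) \<le> z"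
  shows "c \<le> z powr e"
proof -
  have "c = (c powr (1 / e)) powr e"
    using assms(1,2) by (simp add: powr_powr)
  also have "\<dots> \<le> z powr e"
    using assms by (intro powr_mono2) auto
  finally show ?thesis .
qed

lemma has_vector_derivative_fst:
  "(f has_vector_derivative D) F \<Longrightarrow> ((\<lambda>x. fst (f x)) has_vector_derivative fst D) F"
  unfolding has_vector_derivative_def by (drule has_derivative_fst) simp

lemma has_vector_derivative_snd:
  "(f has_vector_derivative D) F \<Longrightarrow> ((\<lambda>x. snd (f x)) has_vector_derivative snd D) F"
  unfolding has_vector_derivative_def by (drule has_derivative_snd) simp

section \<open>The regularized vector field\<close>

lemma clamp_real_eq: "a \<le> b \<Longrightarrow> clamp a b (x::real) = max a (min b x)"
  unfolding clamp_def Basis_real_def by auto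

lemma lipschitz_on_powr_Icc:
  fixes e z :: real
  assumes "1 \<le> e"
  shows "(e * z powr (e - 1))-lipschitz_on {0..z} (\<lambda>x. x powr e)"
proof -
  have main: "\<bar>x powr e - y powr e\<bar> \<le> e * z powr (e - 1) * \<bar>x - y\<bar>"
    if xy: "y < x" "x \<le> z" "0 \<le> y" for x y
  proof -
    obtain l s where s: "y < s" "s < x" and l: "((\<lambda>s. s powr e) has_real_derivative l) (at s)"
      and eq: "x powr e - y powr e = (x - y) * l"
    proof (rule MVT[OF \<open>y < x\<close>, of "\<lambda>s. s powr e", elim_format])
      show "continuous_on {y..x} (\<lambda>s. s powr e)"
        using assms xy by (intro continuous_on_powr' continuous_intros) auto
      show "(\<lambda>s. s powr e) differentiable (at s)" if "y < s" "s < x" for s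
        using has_real_derivative_powr[of s e] that \<open>0 \<le> y\<close> real_differentiable_def by force
    qed (use xy in auto)
    have "l = e * s powr (e - 1)"
      using DERIV_unique[OF l has_real_derivative_powr] s xy by simp
    then have "0 \<le> l" "l \<le> e * z powr (e - 1)"
      using assms s xy by (auto intro!: mult_left_mono powr_mono2)
    then show ?thesis
      using eq xy by (simp add: abs_mult mult.commute mult_left_mono)
  qed
  show ?thesis
  proof (rule lipschitz_onI)
    fix x y assume "x \<in> {0..z}" "y \<in> {0..z}"
    then show "dist (x powr e) (y powr e) \<le> e * z powr (e - 1) * dist x y"
      using main[of x y] main[of y x]
      by (cases x y rule: linorder_cases) (auto simp: dist_real_def abs_minus_commute)
  qed (use assms in simp)
qed

lemma lipschitz_on_mult_bounded:
  fixes f g :: "'a::metric_space \<Rightarrow> real"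
  assumes "C-lipschitz_on UNIV f" "D-lipschitz_on UNIV g"
    and "\<And>x. \<bar>f x\<bar> \<le> A" "\<And>x. \<bar>g x\<bar> \<le> B"
  shows "(A * D + B * C)-lipschitz_on UNIV (\<lambda>x. f x * g x)"
proof (rule lipschitz_onI)
  have nonneg: "0 \<le> A" "0 \<le> B" "0 \<le> C" "0 \<le> D"
    using assms(3,4)[of undefined] lipschitz_on_nonneg[OF assms(1)] lipschitz_on_nonneg[OF assms(2)]
    by (auto intro: order_trans[OF abs_ge_zero])
  then show "0 \<le> A * D + B * C"
    by simp
  fix x y
  have "f x * g x - f y * g y = f x * (g x - g y) + g y * (f x - f y)"
    by (simp add: algebra_simps)
  then have "dist (f x * g x) (f y * g y) = \<bar>f x * (g x - g y) + g y * (f x - f y)\<bar>"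
    by (simp add: dist_real_def)
  also have "\<dots> \<le> \<bar>f x\<bar> * dist (g x) (g y) + \<bar>g y\<bar> * dist (f x) (f y)"
    by (rule order_trans[OF abs_triangle_ineq]) (simp add: abs_mult dist_real_def)
  also have "\<dots> \<le> A * (D * dist x y) + B * (C * dist x y)"
    using assms nonneg
    by (intro add_mono mult_mono lipschitz_onD[of _ UNIV]) auto
  finally show "dist (f x * g x) (f y * g y) \<le> (A * D + B * C) * dist x y"
    by (simp add: algebra_simps)
qed

text \<open>The components are \<open>dt/d\<tau>\<close>, \<open>dz/d\<tau>\<close> and \<open>dw/d\<tau>\<close> for \<open>u = z powr k\<close>, \<open>w = u'\<close> and
  \<open>dt = z powr (k - 1) d\<tau>\<close>; the singular force becomes \<open>z\<^sup>2\<close> because \<open>k \<alpha> = k - 3\<close> for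
  \<open>k = 3 / (1 - \<alpha>)\<close>. Clamping does not affect orbits with \<open>0 \<le> z \<le> zmax\<close>.\<close>
definition regularized_field :: "real \<Rightarrow> (real \<Rightarrow> real) \<Rightarrow> real \<Rightarrow> real \<times> real \<times> real \<Rightarrow> real \<times> real \<times> real"
  where "regularized_field k p zmax = (\<lambda>(t, z, w).
    (clamp 0 zmax z powr (k - 1), w / k, clamp 0 zmax z powr (k - 1) * p t + (clamp 0 zmax z)\<^sup>2))"

lemma lipschitz_regularized_field:
  assumes "2 \<le> k" "0 \<le> zmax" "Lp-lipschitz_on UNIV p" "\<And>t. \<bar>p t\<bar> \<le> B"
  shows "\<exists>L. L-lipschitz_on UNIV (regularized_field k p zmax)"
proof -
  define c where "c X = clamp 0 zmax (fst (snd X))" for X :: "real \<times> real \<times> real"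
  define \<Lambda> where "\<Lambda> = (k - 1) * zmax powr (k - 1 - 1)"
  have c_range: "c X \<in> {0..zmax}" for X
    using assms(2) by (simp add: c_def clamp_real_eq)
  have fst_lip: "1-lipschitz_on UNIV fst" and snd_lip: "1-lipschitz_on UNIV snd"
    by (rule lipschitz_onI, simp_all add: dist_fst_le dist_snd_le)+
  have c_lip: "1-lipschitz_on UNIV c"
  proof (rule lipschitz_onI)
    fix X Y :: "real \<times> real \<times> real"
    have "dist (c X) (c Y) \<le> dist (fst (snd X)) (fst (snd Y))"
      unfolding c_def by (rule dist_clamps_le_dist_args)
    also have "\<dots> \<le> dist (snd X) (snd Y)"
      by (rule dist_fst_le)
    also have "\<dots> \<le> dist X Y"
      by (rule dist_snd_le)
    finally show "dist (c X) (c Y) \<le> 1 * dist X Y"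
      by simp
  qed simp
  have "\<Lambda>-lipschitz_on (range c) (\<lambda>x. x powr (k - 1))"
    unfolding \<Lambda>_def by (rule lipschitz_on_subset[OF lipschitz_on_powr_Icc]) (use assms(1) c_range in auto)
  from lipschitz_on_compose2[OF c_lip this]
  have c_pow_lip: "\<Lambda>-lipschitz_on UNIV (\<lambda>X. c X powr (k - 1))"
    by simp
  have c_pow_bound: "\<bar>c X powr (k - 1)\<bar> \<le> zmax powr (k - 1)" for X
    using c_range[of X] assms(1) by (auto intro: powr_mono2)
  have c_bound: "\<bar>c X\<bar> \<le> zmax" for X
    using c_range by auto
  from lipschitz_on_compose2[OF fst_lip lipschitz_on_subset[OF assms(3) subset_UNIV]]
  have p_lip: "Lp-lipschitz_on UNIV (\<lambda>X. p (fst X))"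
    by simp
  from lipschitz_on_compose2[OF snd_lip lipschitz_on_subset[OF snd_lip subset_UNIV]]
  have "(\<bar>1 / k\<bar> * (1 * 1))-lipschitz_on UNIV (\<lambda>X. 1 / k * snd (snd X))"
    by (rule lipschitz_on_cmult_real)
  then have w_lip: "(1 / k)-lipschitz_on UNIV (\<lambda>X. snd (snd X) / k)"
    using assms(1) by simp
  have acc_lip: "(zmax powr (k - 1) * Lp + B * \<Lambda> + (zmax * 1 + zmax * 1))-lipschitz_on UNIV
      (\<lambda>X. c X powr (k - 1) * p (fst X) + c X * c X)"
    by (intro lipschitz_on_add lipschitz_on_mult_bounded c_pow_lip p_lip c_pow_bound assms(4) c_lip c_bound)
  have "regularized_field k p zmax
      = (\<lambda>X. (c X powr (k - 1), snd (snd X) / k, c X powr (k - 1) * p (fst X) + c X * c X))"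
    by (simp add: regularized_field_def c_def fun_eq_iff power2_eq_square split_beta)
  then show ?thesis
    using lipschitz_on_Pair[OF c_pow_lip lipschitz_on_Pair[OF w_lip acc_lip]] by auto
qed

section \<open>Flights\<close>

definition flight ::
  "real \<Rightarrow> (real \<Rightarrow> real) \<Rightarrow> real \<Rightarrow> real \<Rightarrow> (real \<Rightarrow> real) \<Rightarrow> (real \<Rightarrow> real) \<Rightarrow> real \<Rightarrow> real \<Rightarrow> bool"
  where "flight \<alpha> p t0 t1 u du v w \<longleftrightarrow>
    t0 < t1 \<and> continuous_on {t0..t1} u \<and> u t0 = 0 \<and> u t1 = 0 \<and> solves_on \<alpha> p u du t0 t1 \<and>
    (du \<longlongrightarrow> v) (at_right t0) \<and> (du \<longlongrightarrow> - w) (at_left t1)"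

lemma time_change_inverse:
  fixes T v :: "real \<Rightarrow> real"
  assumes "a < b" and cont: "continuous_on {a..b} T"
    and deriv: "\<And>\<tau>. a < \<tau> \<Longrightarrow> \<tau> < b \<Longrightarrow> (T has_real_derivative v \<tau>) (at \<tau>)"
    and pos: "\<And>\<tau>. a < \<tau> \<Longrightarrow> \<tau> < b \<Longrightarrow> 0 < v \<tau>"
  obtains \<sigma> where "T a < T b" "continuous_on {T a..T b} \<sigma>" "\<sigma> (T a) = a" "\<sigma> (T b) = b"
    "\<And>t. t \<in> {T a..T b} \<Longrightarrow> \<sigma> t \<in> {a..b} \<and> T (\<sigma> t) = t"
    "\<And>t. T a < t \<Longrightarrow> t < T b \<Longrightarrow> a < \<sigma> t \<and> \<sigma> t < b \<and> (\<sigma> has_real_derivative inverse (v (\<sigma> t))) (at t)"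
proof -
  have mono: "T x < T y" if "a \<le> x" "x < y" "y \<le> b" for x y
  proof (rule DERIV_pos_imp_increasing_open[OF \<open>x < y\<close>])
    show "\<exists>d. (T has_real_derivative d) (at s) \<and> 0 < d" if "x < s" "s < y" for s
      using that \<open>a \<le> x\<close> \<open>y \<le> b\<close> deriv pos by (intro exI[of _ "v s"]) auto
    show "continuous_on {x..y} T"
      by (rule continuous_on_subset[OF cont]) (use that in auto)
  qed
  then have "T a < T b"
    using \<open>a < b\<close> by simp
  have inj: "inj_on T {a..b}"
    by (rule inj_onI) (metis atLeastAtMost_iff linorder_neqE_linordered_idom mono order_less_irrefl)
  have img: "T ` {a..b} = {T a..T b}"
  proof
    show "T ` {a..b} \<subseteq> {T a..T b}"
      using mono by (force simp: le_less)
    show "{T a..T b} \<subseteq> T ` {a..b}"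
    proof
      fix t assume "t \<in> {T a..T b}"
      then obtain \<tau> where "a \<le> \<tau>" "\<tau> \<le> b" "T \<tau> = t"
        using IVT'[of T a t b] \<open>a < b\<close> cont by auto
      then show "t \<in> T ` {a..b}"
        by auto
    qed
  qed
  define \<sigma> where "\<sigma> = the_inv_into {a..b} T"
  have \<sigma>: "\<sigma> t \<in> {a..b} \<and> T (\<sigma> t) = t" if "t \<in> {T a..T b}" for t
    unfolding \<sigma>_def using that img inj by (metis f_the_inv_into_f the_inv_into_into order_refl)
  have \<sigma>T: "\<sigma> (T \<tau>) = \<tau>" if "\<tau> \<in> {a..b}" for \<tau>
    unfolding \<sigma>_def by (rule the_inv_into_f_f[OF inj that])
  have cont_\<sigma>: "continuous_on {T a..T b} \<sigma>"
    unfolding \<sigma>_def img[symmetric] by (rule continuous_on_inv_into[OF cont compact_Icc inj])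
  have interior: "a < \<sigma> t \<and> \<sigma> t < b" if "T a < t" "t < T b" for t
    using \<sigma>[of t] that by (auto simp: le_less)
  have deriv_\<sigma>: "(\<sigma> has_real_derivative inverse (v (\<sigma> t))) (at t)" if t: "T a < t" "t < T b" for t
  proof (rule DERIV_inverse_function[where f = T and a = "T a" and b = "T b"])
    show "(T has_real_derivative v (\<sigma> t)) (at (\<sigma> t))"
      using interior[OF t] deriv by blast
    show "v (\<sigma> t) \<noteq> 0"
      using interior[OF t] pos by force
    show "isCont \<sigma> t"
      by (rule continuous_on_interior[OF cont_\<sigma>]) (use t in auto)
  qed (use t \<sigma> in auto)
  show ?thesis
  proof (rule that[OF \<open>T a < T b\<close> cont_\<sigma>])
    show "\<sigma> (T a) = a" "\<sigma> (T b) = b"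
      using \<sigma>T \<open>a < b\<close> by auto
  qed (use \<sigma> interior deriv_\<sigma> in auto)
qed

lemma time_changed_derivatives:
  fixes Z W \<sigma> :: "real \<Rightarrow> real" and k \<alpha> P s :: real
  assumes k: "k * (1 - \<alpha>) = 3" "3 < k" and "0 < Z (\<sigma> s)"
    and d\<sigma>: "(\<sigma> has_real_derivative inverse (Z (\<sigma> s) powr (k - 1))) (at s)"
    and dZ: "(Z has_real_derivative W (\<sigma> s) / k) (at (\<sigma> s))"
    and dW: "(W has_real_derivative Z (\<sigma> s) powr (k - 1) * P + (Z (\<sigma> s))\<^sup>2) (at (\<sigma> s))"
  shows "((\<lambda>t. Z (\<sigma> t) powr k) has_real_derivative W (\<sigma> s)) (at s)"
    and "((\<lambda>t. W (\<sigma> t)) has_real_derivative P + 1 / (Z (\<sigma> s) powr k) powr \<alpha>) (at s)"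
proof -
  define z where "z = Z (\<sigma> s)"
  have "0 < z"
    using \<open>0 < Z (\<sigma> s)\<close> by (simp add: z_def)
  have "((\<lambda>t. Z (\<sigma> t)) has_real_derivative W (\<sigma> s) / k * inverse (z powr (k - 1))) (at s)"
    unfolding z_def by (rule DERIV_chain2[OF dZ d\<sigma>])
  from DERIV_chain2[OF has_real_derivative_powr[OF \<open>0 < Z (\<sigma> s)\<close>, of k] this]
  have "((\<lambda>t. Z (\<sigma> t) powr k) has_real_derivative
      k * z powr (k - 1) * (W (\<sigma> s) / k * inverse (z powr (k - 1)))) (at s)"
    by (simp add: z_def)
  moreover have "k * z powr (k - 1) * (W (\<sigma> s) / k * inverse (z powr (k - 1))) = W (\<sigma> s)"
    using \<open>0 < z\<close> k by (simp add: field_simps)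
  ultimately show "((\<lambda>t. Z (\<sigma> t) powr k) has_real_derivative W (\<sigma> s)) (at s)"
    by simp
  have "((\<lambda>t. W (\<sigma> t)) has_real_derivative (z powr (k - 1) * P + z\<^sup>2) * inverse (z powr (k - 1))) (at s)"
    unfolding z_def by (rule DERIV_chain2[OF dW d\<sigma>])
  moreover have "z powr (k - 1) = z\<^sup>2 * (z powr k) powr \<alpha>"
  proof -
    have "k - 1 = 2 + k * \<alpha>"
      using k by (simp add: algebra_simps)
    then have "z powr (k - 1) = z powr 2 * z powr (k * \<alpha>)"
      by (metis powr_add)
    then show ?thesis
      using \<open>0 < z\<close> by (simp add: powr_powr powr_numeral)
  qed
  then have "(z powr (k - 1) * P + z\<^sup>2) * inverse (z powr (k - 1)) = P + 1 / (z powr k) powr \<alpha>"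
    using \<open>0 < z\<close> by (simp add: field_simps)
  ultimately show "((\<lambda>t. W (\<sigma> t)) has_real_derivative P + 1 / (Z (\<sigma> s) powr k) powr \<alpha>) (at s)"
    by (simp add: z_def)
qed

lemma flight_of_regularized_orbit:
  fixes T Z W p :: "real \<Rightarrow> real" and \<alpha> k b :: real
  assumes \<alpha>: "0 < \<alpha>" "\<alpha> < 1" and k: "k * (1 - \<alpha>) = 3" and "0 < b"
    and cont: "continuous_on {0..b} T" "continuous_on {0..b} Z" "continuous_on {0..b} W"
    and dT: "\<And>\<tau>. 0 < \<tau> \<Longrightarrow> \<tau> < b \<Longrightarrow> (T has_real_derivative Z \<tau> powr (k - 1)) (at \<tau>)"
    and dZ: "\<And>\<tau>. 0 < \<tau> \<Longrightarrow> \<tau> < b \<Longrightarrow> (Z has_real_derivative W \<tau> / k) (at \<tau>)"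
    and dW: "\<And>\<tau>. 0 < \<tau> \<Longrightarrow> \<tau> < b \<Longrightarrow> (W has_real_derivative Z \<tau> powr (k - 1) * p (T \<tau>) + (Z \<tau>)\<^sup>2) (at \<tau>)"
    and Z_pos: "\<And>\<tau>. 0 < \<tau> \<Longrightarrow> \<tau> < b \<Longrightarrow> 0 < Z \<tau>"
    and "Z 0 = 0" "Z b = 0"
  shows "\<exists>u du. flight \<alpha> p (T 0) (T b) u du (W 0) (- W b)"
proof -
  have "3 < k"
  proof -
    have "k = 3 / (1 - \<alpha>)" "3 < 3 / (1 - \<alpha>)"
      using k \<alpha> by (auto simp: field_simps)
    then show ?thesis by simp
  qed
  have Z_powr_pos: "0 < Z \<tau> powr (k - 1)" if "0 < \<tau>" "\<tau> < b" for \<tau>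
    using Z_pos[OF that] by simp
  obtain \<sigma> where "T 0 < T b" and cont_\<sigma>: "continuous_on {T 0..T b} \<sigma>" and "\<sigma> (T 0) = 0" "\<sigma> (T b) = b"
    and \<sigma>: "\<And>t. t \<in> {T 0..T b} \<Longrightarrow> \<sigma> t \<in> {0..b} \<and> T (\<sigma> t) = t"
    and d\<sigma>: "\<And>t. T 0 < t \<Longrightarrow> t < T b \<Longrightarrow>
      0 < \<sigma> t \<and> \<sigma> t < b \<and> (\<sigma> has_real_derivative inverse (Z (\<sigma> t) powr (k - 1))) (at t)"
    using time_change_inverse[OF \<open>0 < b\<close> cont(1) dT Z_powr_pos] by blast
  have Z_nonneg: "0 \<le> Z \<tau>" if "\<tau> \<in> {0..b}" for \<tau>
    using that Z_pos[of \<tau>] \<open>Z 0 = 0\<close> \<open>Z b = 0\<close> by (cases "\<tau> = 0 \<or> \<tau> = b") (auto simp: less_eq_real_def)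
  define u where "u = (\<lambda>t. Z (\<sigma> t) powr k)"
  define du where "du = (\<lambda>t. W (\<sigma> t))"
  have "continuous_on {T 0..T b} (\<lambda>t. Z (\<sigma> t))"
    by (rule continuous_on_compose2[OF cont(2) cont_\<sigma>]) (use \<sigma> in auto)
  then have cont_u: "continuous_on {T 0..T b} u"
    unfolding u_def using \<open>3 < k\<close> \<sigma> Z_nonneg by (intro continuous_on_powr' continuous_on_const) auto
  have cont_du: "continuous_on {T 0..T b} du"
    unfolding du_def by (rule continuous_on_compose2[OF cont(3) cont_\<sigma>]) (use \<sigma> in auto)
  have "solves_on \<alpha> p u du (T 0) (T b)"
    unfolding solves_on_def
  proof (intro ballI conjI)
    fix s assume "s \<in> {T 0<..<T b}"
    then have s: "0 < \<sigma> s" "\<sigma> s < b" "T (\<sigma> s) = s"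
      and d\<sigma>_s: "(\<sigma> has_real_derivative inverse (Z (\<sigma> s) powr (k - 1))) (at s)"
      using d\<sigma> \<sigma> by auto
    note derivs = time_changed_derivatives[OF k \<open>3 < k\<close> Z_pos[OF s(1,2)] d\<sigma>_s dZ[OF s(1,2)] dW[OF s(1,2)]]
    show "0 < u s"
      using Z_pos[OF s(1,2)] by (simp add: u_def)
    show "(u has_real_derivative du s) (at s)"
      using derivs(1) by (simp add: u_def du_def)
    show "(du has_real_derivative p s + 1 / u s powr \<alpha>) (at s)"
      using derivs(2) s(3) by (simp add: u_def du_def)
  qed
  moreover have du_lim: "(du \<longlongrightarrow> du t) (at t within {T 0..T b})" if "t \<in> {T 0..T b}" for t
    using cont_du that by (simp add: continuous_on_def)
  have "(du \<longlongrightarrow> W 0) (at_right (T 0))" "(du \<longlongrightarrow> - (- W b)) (at_left (T b))"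
    using du_lim[of "T 0"] du_lim[of "T b"] \<open>T 0 < T b\<close> \<open>\<sigma> (T 0) = 0\<close> \<open>\<sigma> (T b) = b\<close>
    by (auto simp: at_within_Icc_at_right at_within_Icc_at_left du_def)
  moreover have "u (T 0) = 0" "u (T b) = 0"
    using \<open>\<sigma> (T 0) = 0\<close> \<open>\<sigma> (T b) = b\<close> \<open>Z 0 = 0\<close> \<open>Z b = 0\<close> \<open>3 < k\<close> by (simp_all add: u_def)
  ultimately show ?thesis
    using \<open>T 0 < T b\<close> cont_u unfolding flight_def by blast
qed

section \<open>Chaining flights\<close>

lemma solves_on_cong:
  assumes "solves_on \<alpha> p u du a b"
    and "\<And>s. a < s \<Longrightarrow> s < b \<Longrightarrow> u' s = u s" "\<And>s. a < s \<Longrightarrow> s < b \<Longrightarrow> du' s = du s"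
  shows "solves_on \<alpha> p u' du' a b"
  unfolding solves_on_def
proof (intro ballI conjI)
  fix s assume s: "s \<in> {a<..<b}"
  then have "0 < u s" "(u has_real_derivative du s) (at s)"
    "(du has_real_derivative p s + 1 / u s powr \<alpha>) (at s)"
    using assms(1) by (auto simp: solves_on_def)
  with s assms(2,3) show "0 < u' s" "(u' has_real_derivative du' s) (at s)"
    "(du' has_real_derivative p s + 1 / u' s powr \<alpha>) (at s)"
    by (auto intro: has_field_derivative_transform_within_open[of _ _ _ "{a<..<b}"])
qed

lemma flight_cong:
  assumes "flight \<alpha> p t0 t1 u du v w"
    and "\<And>s. t0 \<le> s \<Longrightarrow> s \<le> t1 \<Longrightarrow> u' s = u s" "\<And>s. t0 < s \<Longrightarrow> s < t1 \<Longrightarrow> du' s = du s"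
  shows "flight \<alpha> p t0 t1 u' du' v w"
proof -
  have "t0 < t1"
    using assms(1) by (simp add: flight_def)
  then have "eventually (\<lambda>s. du' s = du s) (at_right t0)" "eventually (\<lambda>s. du' s = du s) (at_left t1)"
    using eventually_at_right_real[OF \<open>t0 < t1\<close>] eventually_at_left_real[OF \<open>t0 < t1\<close>] assms(3)
    by (auto elim!: eventually_mono)
  with assms show ?thesis
    unfolding flight_def by (auto simp: tendsto_cong intro: solves_on_cong continuous_on_cong[THEN iffD1])
qed

lemma finite_chain_less:
  fixes t :: "nat \<Rightarrow> real"
  assumes "\<forall>k<n. t k < t (Suc k)" "i < j" "j \<le> n"
  shows "t i < t j"
  using assms(2,3)
proof (induction j)
  case (Suc j)
  have "t j < t (Suc j)"
    using assms(1) Suc.prems by auto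
  then show ?case
    using Suc by (cases "i = j") auto
qed simp

lemma bounces_n_times_cong:
  assumes "bounces_n_times \<alpha> p1 p2 p t0 v0 n u du t"
    and u: "\<And>s. t0 \<le> s \<Longrightarrow> u' s = u s" and du: "\<And>s. t0 < s \<Longrightarrow> du' s = du s"
  shows "bounces_n_times \<alpha> p1 p2 p t0 v0 n u' du' t"
proof -
  have t0: "t 0 = t0" and chain: "\<forall>k<n. t k < t (Suc k)" and cont: "continuous_on {t 0..t n} u"
    and zeros: "\<forall>k\<le>n. u (t k) = 0" and sol: "\<forall>k<n. solves_on \<alpha> p u du (t k) (t (Suc k))"
    and start: "(du \<longlongrightarrow> v0) (at_right (t 0))"
    and impacts: "\<forall>k\<in>{1..n}. \<exists>w. w < 0 \<and> (du \<longlongrightarrow> w) (at_left (t k)) \<and>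
      (k < n \<longrightarrow> (du \<longlongrightarrow> - w) (at_right (t k)) \<and> - w > vel_threshold \<alpha> p1 p2)"
    using assms(1) unfolding bounces_n_times_def by blast+
  have t_ge: "t0 \<le> t k" if "k \<le> n" for k
    using finite_chain_less[OF chain, of 0 k] that t0 by (cases k) auto
  have at_right: "(du' \<longlongrightarrow> l) (at_right (t k)) \<longleftrightarrow> (du \<longlongrightarrow> l) (at_right (t k))" if "k \<le> n" for k l
    using eventually_at_right_less[of "t k"] t_ge[OF that] du
    by (intro tendsto_cong) (auto elim!: eventually_mono)
  have at_left: "(du' \<longlongrightarrow> l) (at_left (t k)) \<longleftrightarrow> (du \<longlongrightarrow> l) (at_left (t k))" if "1 \<le> k" "k \<le> n" for k l
    using eventually_at_left_real[OF finite_chain_less[OF chain, of 0 k]] that t0 du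
    by (intro tendsto_cong) (auto elim!: eventually_mono)
  have "continuous_on {t 0..t n} u'"
    by (rule continuous_on_cong[THEN iffD1, OF refl _ cont]) (use u t0 in auto)
  moreover have "\<forall>k\<le>n. u' (t k) = 0"
    using zeros u[OF t_ge] by auto
  moreover have "\<forall>k<n. solves_on \<alpha> p u' du' (t k) (t (Suc k))"
  proof (intro allI impI)
    fix k assume "k < n"
    then have "solves_on \<alpha> p u du (t k) (t (Suc k))" "t0 \<le> t k"
      using sol t_ge[of k] by auto
    then show "solves_on \<alpha> p u' du' (t k) (t (Suc k))"
      by (auto intro: solves_on_cong[of \<alpha> p u du] simp: u du)
  qed
  moreover have "(du' \<longlongrightarrow> v0) (at_right (t 0))"
    using start at_right[of 0] by simp
  moreover have "\<forall>k\<in>{1..n}. \<exists>w. w < 0 \<and> (du' \<longlongrightarrow> w) (at_left (t k)) \<and>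
      (k < n \<longrightarrow> (du' \<longlongrightarrow> - w) (at_right (t k)) \<and> - w > vel_threshold \<alpha> p1 p2)"
    using impacts at_left at_right by simp
  ultimately show ?thesis
    using t0 chain unfolding bounces_n_times_def by blast
qed

lemma bounces_n_times_Suc:
  assumes "flight \<alpha> p t0 t1 u du v0 w" "0 < w" "vel_threshold \<alpha> p1 p2 < w"
    and "bounces_n_times \<alpha> p1 p2 p t1 w n u du t"
  shows "bounces_n_times \<alpha> p1 p2 p t0 v0 (Suc n) u du (\<lambda>k. if k = 0 then t0 else t (k - 1))"
    (is "bounces_n_times _ _ _ _ _ _ _ _ _ ?t")
proof -
  have "t0 < t1" and cont1: "continuous_on {t0..t1} u" and "u t0 = 0"
    and sol1: "solves_on \<alpha> p u du t0 t1" and "(du \<longlongrightarrow> v0) (at_right t0)"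
    and land: "(du \<longlongrightarrow> - w) (at_left t1)"
    using assms(1) unfolding flight_def by blast+
  have t0: "t 0 = t1" and chain: "\<forall>k<n. t k < t (Suc k)" and cont2: "continuous_on {t 0..t n} u"
    and zeros: "\<forall>k\<le>n. u (t k) = 0" and sol: "\<forall>k<n. solves_on \<alpha> p u du (t k) (t (Suc k))"
    and start: "(du \<longlongrightarrow> w) (at_right (t 0))"
    and impacts: "\<forall>k\<in>{1..n}. \<exists>w. w < 0 \<and> (du \<longlongrightarrow> w) (at_left (t k)) \<and>
      (k < n \<longrightarrow> (du \<longlongrightarrow> - w) (at_right (t k)) \<and> - w > vel_threshold \<alpha> p1 p2)"
    using assms(4) unfolding bounces_n_times_def by blast+
  have "t1 \<le> t n"
    using finite_chain_less[OF chain, of 0 n] t0 by (cases n) auto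
  have "continuous_on {?t 0..?t (Suc n)} u"
    using continuous_on_closed_Un[OF _ _ cont1 cont2] \<open>t0 < t1\<close> \<open>t1 \<le> t n\<close> t0
    by (simp add: ivl_disj_un_two_touch)
  moreover have "\<forall>k<Suc n. ?t k < ?t (Suc k)"
    using \<open>t0 < t1\<close> chain t0 by (auto simp: less_Suc_eq_0_disj)
  moreover have "\<forall>k\<le>Suc n. u (?t k) = 0"
    using \<open>u t0 = 0\<close> zeros by (auto simp: le_Suc_eq less_Suc_eq_0_disj)
  moreover have "\<forall>k<Suc n. solves_on \<alpha> p u du (?t k) (?t (Suc k))"
    using sol1 sol t0 by (auto simp: less_Suc_eq_0_disj)
  moreover have "\<exists>w'. w' < 0 \<and> (du \<longlongrightarrow> w') (at_left (?t k)) \<and>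
      (k < Suc n \<longrightarrow> (du \<longlongrightarrow> - w') (at_right (?t k)) \<and> vel_threshold \<alpha> p1 p2 < - w')"
    if k: "k \<in> {1..Suc n}" for k
  proof (cases "k = 1")
    case True
    then show ?thesis
      using land start t0 assms(2,3) by (intro exI[of _ "- w"]) auto
  next
    case False
    then obtain j where "k = Suc j" "j \<in> {1..n}"
      using k by (cases k) auto
    then show ?thesis
      using impacts by auto
  qed
  ultimately show ?thesis
    using \<open>(du \<longlongrightarrow> v0) (at_right t0)\<close> unfolding bounces_n_times_def by auto
qed

lemma bounces_n_times_of_flights:
  assumes flights: "\<And>M. \<exists>V>0. \<forall>t0 v. V < v \<longrightarrow> (\<exists>t1 u du w. M < w \<and> flight \<alpha> p t0 t1 u du v w)"
  shows "\<exists>\<gamma>>0. \<forall>t0 v0. \<gamma> < v0 \<longrightarrow> (\<exists>u du t. bounces_n_times \<alpha> p1 p2 p t0 v0 n u du t)"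
proof (induction n)
  case 0
  have "bounces_n_times \<alpha> p1 p2 p t0 v0 0 (\<lambda>_. 0) (\<lambda>_. v0) (\<lambda>_. t0)" for t0 v0
    by (simp add: bounces_n_times_def)
  then show ?case
    using zero_less_one by blast
next
  case (Suc n)
  then obtain \<gamma> where "0 < \<gamma>"
    and tail: "\<And>t0 v0. \<gamma> < v0 \<Longrightarrow> \<exists>u du t. bounces_n_times \<alpha> p1 p2 p t0 v0 n u du t"
    by blast
  obtain V where "0 < V" and first: "\<And>t0 v. V < v \<Longrightarrow>
      \<exists>t1 u du w. max \<gamma> (vel_threshold \<alpha> p1 p2) < w \<and> flight \<alpha> p t0 t1 u du v w"
    using flights by blast
  have "\<exists>u du t. bounces_n_times \<alpha> p1 p2 p t0 v0 (Suc n) u du t" if "V < v0" for t0 v0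
  proof -
    obtain t1 u1 du1 w where w: "max \<gamma> (vel_threshold \<alpha> p1 p2) < w" and fl: "flight \<alpha> p t0 t1 u1 du1 v0 w"
      using first[OF \<open>V < v0\<close>] by blast
    obtain u2 du2 t where bn: "bounces_n_times \<alpha> p1 p2 p t1 w n u2 du2 t"
      using tail w by force
    define u where "u s = (if s \<le> t1 then u1 s else u2 s)" for s
    define du where "du s = (if s < t1 then du1 s else du2 s)" for s
    have "u1 t1 = 0" "u2 t1 = 0"
      using fl bn by (auto simp: flight_def bounces_n_times_def)
    have "bounces_n_times \<alpha> p1 p2 p t1 w n u du t"
      by (rule bounces_n_times_cong[OF bn]) (use \<open>u1 t1 = 0\<close> \<open>u2 t1 = 0\<close> in \<open>auto simp: u_def du_def\<close>)
    moreover have "flight \<alpha> p t0 t1 u du v0 w"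
      by (rule flight_cong[OF fl]) (auto simp: u_def du_def)
    ultimately show ?thesis
      using bounces_n_times_Suc[of \<alpha> p t0 t1 u du v0 w] w \<open>0 < \<gamma>\<close> by fastforce
  qed
  then show ?case
    using \<open>0 < V\<close> by blast
qed

section \<open>A single fast flight\<close>

locale bouncing_setting =
  fixes \<alpha> p1 p2 :: real and p :: "real \<Rightarrow> real"
  assumes alpha_pos: "0 < \<alpha>" and alpha_less_1: "\<alpha> < 1"
    and p2_le_p1: "p2 \<le> p1" and p1_neg: "p1 < 0"
    and p_bounds: "\<And>t. p2 \<le> p t \<and> p t \<le> p1"
begin

definition "g_low = - p1"
definition "g_high = - p2"
definition "k = 3 / (1 - \<alpha>)"
definition "z_crit = max 1 ((2 / g_low) powr (1 / (k - 3)))"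
definition "z_apex = max (4 * z_crit) ((2 / (g_low * (1 - \<alpha>))) powr (1 / (k - 3)))"

lemma g_low_pos: "0 < g_low" and g_high_pos: "0 < g_high"
  using p1_neg p2_le_p1 by (auto simp: g_low_def g_high_def)

lemma g_bounds: "g_low \<le> - p t" "- p t \<le> g_high"
  using p_bounds[of t] by (auto simp: g_low_def g_high_def)

lemma k_mult: "k * (1 - \<alpha>) = 3" and k_gt_3: "3 < k"
proof -
  have "1 - \<alpha> \<noteq> 0"
    using alpha_less_1 by simp
  then show "k * (1 - \<alpha>) = 3"
    by (simp add: k_def field_simps)
  have "3 < 3 / (1 - \<alpha>)"
    using alpha_pos alpha_less_1 by (simp add: field_simps)
  then show "3 < k"
    by (simp add: k_def)
qed

lemma z_crit_ge_1: "1 \<le> z_crit"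
  by (simp add: z_crit_def)

lemma square_le_gravity:
  assumes "z_crit \<le> z"
  shows "z\<^sup>2 \<le> g_low / 2 * z powr (k - 1)"
proof -
  have "0 < z"
    using assms z_crit_ge_1 by simp
  have "2 / g_low \<le> z powr (k - 3)"
    using assms g_low_pos k_gt_3 by (intro le_powr_of_root_le) (auto simp: z_crit_def)
  then have "1 \<le> g_low / 2 * z powr (k - 3)"
    using g_low_pos by (simp add: field_simps)
  have "z powr (k - 1) = z powr (k - 3) * z powr 2"
    by (simp flip: powr_add)
  then have z_powr: "z powr (k - 1) = z powr (k - 3) * z\<^sup>2"
    using \<open>0 < z\<close> by (simp add: powr_numeral)
  have "z\<^sup>2 = 1 * z\<^sup>2"
    by simp
  also have "\<dots> \<le> g_low / 2 * z powr (k - 3) * z\<^sup>2"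
    using \<open>1 \<le> g_low / 2 * z powr (k - 3)\<close> by (intro mult_right_mono) auto
  also have "\<dots> = g_low / 2 * z powr (k - 1)"
    by (simp add: z_powr)
  finally show ?thesis .
qed

end

locale fast_takeoff = bouncing_setting +
  fixes v :: real
  assumes v_pos: "0 < v"
    and v_large_rise: "4 * k * g_high * z_crit powr k \<le> v\<^sup>2"
    and v_large_apex: "2 * g_high * z_apex powr k \<le> v\<^sup>2"
begin

text \<open>\<open>\<kappa>\<close> bounds the deceleration above \<open>z_crit\<close>; \<open>rise_time\<close> and \<open>w_rise\<close> bound the duration of
  the rise to \<open>z_crit\<close> and the speed during it, \<open>ascent_time\<close> the duration of the remaining
  ascent, \<open>z_max\<close> the height of the flight (where the field is clamped), and \<open>w_land\<close> is the
  guaranteed landing speed.\<close>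
definition "\<kappa> = g_low / 2 * z_crit powr (k - 1)"
definition "rise_time = 2 * k * z_crit / v"
definition "w_rise = v + z_crit\<^sup>2 * rise_time"
definition "ascent_time = w_rise / \<kappa> + 1"
definition "z_max = z_crit + w_rise * ascent_time / k"
definition "w_land = sqrt (g_low * v\<^sup>2 / (4 * g_high))"

lemma \<kappa>_pos: "0 < \<kappa>"
  using g_low_pos z_crit_ge_1 by (simp add: \<kappa>_def)

lemma rise_time_pos: "0 < rise_time"
  using k_gt_3 z_crit_ge_1 v_pos by (simp add: rise_time_def)

lemma w_rise_pos: "0 < w_rise"
  using v_pos rise_time_pos by (simp add: w_rise_def add_pos_nonneg)

lemma ascent_time_pos: "0 < ascent_time"
  using w_rise_pos \<kappa>_pos by (simp add: ascent_time_def add_pos_nonneg)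

lemma z_crit_le_z_max: "z_crit \<le> z_max"
  using w_rise_pos ascent_time_pos k_gt_3 by (simp add: z_max_def)

lemma w_land_pos: "0 < w_land" and w_land_sq: "w_land\<^sup>2 = g_low * v\<^sup>2 / (4 * g_high)"
proof -
  have "0 < g_low * v\<^sup>2 / (4 * g_high)"
    using g_low_pos g_high_pos v_pos by simp
  then show "0 < w_land" "w_land\<^sup>2 = g_low * v\<^sup>2 / (4 * g_high)"
    by (auto simp: w_land_def)
qed

lemma less_w_land:
  assumes "0 \<le> m" "2 * m * sqrt (g_high / g_low) < v"
  shows "m < w_land"
proof -
  have "(2 * m * sqrt (g_high / g_low))\<^sup>2 < v\<^sup>2"
    using assms g_low_pos g_high_pos by (intro power_strict_mono) auto
  then have "m\<^sup>2 < g_low * v\<^sup>2 / (4 * g_high)"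
    using g_low_pos g_high_pos by (simp add: power_mult_distrib field_simps)
  then show ?thesis
    unfolding w_land_def by (rule real_less_rsqrt)
qed

lemma rise_time_bound: "g_high * z_crit powr (k - 1) * rise_time \<le> v / 2"
proof -
  have "z_crit powr k = z_crit powr (k - 1) * z_crit"
    using powr_add[of z_crit "k - 1" 1] z_crit_ge_1 by simp
  then have "g_high * z_crit powr (k - 1) * rise_time = 4 * k * g_high * z_crit powr k / (2 * v)"
    using v_pos by (simp add: rise_time_def field_simps)
  also have "\<dots> \<le> v\<^sup>2 / (2 * v)"
    using v_large_rise v_pos by (intro divide_right_mono) auto
  also have "\<dots> = v / 2"
    using v_pos by (simp add: power2_eq_square)
  finally show ?thesis .
qed

end

locale regularized_flight = fast_takeoff +
  fixes X :: "real \<Rightarrow> real \<times> real \<times> real"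
  assumes X_0: "snd (X 0) = (0, v)"
    and X_cont: "\<And>S. continuous_on {0..S} X"
    and X_deriv: "\<And>\<tau>. 0 < \<tau> \<Longrightarrow> (X has_vector_derivative regularized_field k p z_max (X \<tau>)) (at \<tau>)"
begin

definition "T \<tau> = fst (X \<tau>)"
definition "Z \<tau> = fst (snd (X \<tau>))"
definition "W \<tau> = snd (snd (X \<tau>))"
definition "accel \<tau> = clamp 0 z_max (Z \<tau>) powr (k - 1) * p (T \<tau>) + (clamp 0 z_max (Z \<tau>))\<^sup>2"

lemma Z_0: "Z 0 = 0" and W_0: "W 0 = v"
  using X_0 by (auto simp: Z_def W_def)

lemma T_cont: "continuous_on {a..b} T" and Z_cont: "continuous_on {a..b} Z"
  and W_cont: "continuous_on {a..b} W" if "0 \<le> a"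
proof -
  have "continuous_on {a..b} X"
    using that by (intro continuous_on_subset[OF X_cont[of b]]) auto
  then show "continuous_on {a..b} T" "continuous_on {a..b} Z" "continuous_on {a..b} W"
    unfolding T_def Z_def W_def by (auto intro!: continuous_intros)
qed

lemma T_deriv: "(T has_real_derivative clamp 0 z_max (Z \<tau>) powr (k - 1)) (at \<tau>)"
  and Z_deriv: "(Z has_real_derivative W \<tau> / k) (at \<tau>)"
  and W_deriv: "(W has_real_derivative accel \<tau>) (at \<tau>)" if "0 < \<tau>"
proof -
  have "regularized_field k p z_max (X \<tau>) = (clamp 0 z_max (Z \<tau>) powr (k - 1), W \<tau> / k, accel \<tau>)"
    by (simp add: regularized_field_def accel_def T_def Z_def W_def split_beta)
  with X_deriv[OF that]
  have "((\<lambda>\<tau>. (T \<tau>, Z \<tau>, W \<tau>)) has_vector_derivative (clamp 0 z_max (Z \<tau>) powr (k - 1), W \<tau> / k, accel \<tau>)) (at \<tau>)"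
    by (simp add: T_def Z_def W_def)
  from has_vector_derivative_fst[OF this] has_vector_derivative_fst[OF has_vector_derivative_snd[OF this]]
    has_vector_derivative_snd[OF has_vector_derivative_snd[OF this]]
  show "(T has_real_derivative clamp 0 z_max (Z \<tau>) powr (k - 1)) (at \<tau>)"
    "(Z has_real_derivative W \<tau> / k) (at \<tau>)" "(W has_real_derivative accel \<tau>) (at \<tau>)"
    by (simp_all add: has_real_derivative_iff_has_vector_derivative)
qed

lemma clamp_Z_eq: "0 \<le> Z \<tau> \<Longrightarrow> Z \<tau> \<le> z_max \<Longrightarrow> clamp 0 z_max (Z \<tau>) = Z \<tau>"
  by (simp add: clamp_real_eq)

lemma accel_ge: "Z \<tau> \<le> z_crit \<Longrightarrow> - g_high * z_crit powr (k - 1) \<le> accel \<tau>"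
proof -
  assume "Z \<tau> \<le> z_crit"
  define c where "c = clamp 0 z_max (Z \<tau>)"
  have c: "0 \<le> c" "c \<le> z_crit"
    using \<open>Z \<tau> \<le> z_crit\<close> z_crit_ge_1 z_crit_le_z_max by (auto simp: c_def clamp_real_eq)
  then have "c powr (k - 1) \<le> z_crit powr (k - 1)"
    using k_gt_3 by (intro powr_mono2) auto
  then have "g_high * c powr (k - 1) \<le> g_high * z_crit powr (k - 1)"
    using g_high_pos by simp
  moreover have "c powr (k - 1) * (- g_high) \<le> c powr (k - 1) * p (T \<tau>)"
    using g_bounds(2)[of "T \<tau>"] by (intro mult_left_mono) auto
  ultimately have "- g_high * z_crit powr (k - 1) \<le> c powr (k - 1) * p (T \<tau>)"
    by (simp add: algebra_simps)
  then show ?thesis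
    unfolding accel_def c_def[symmetric] using zero_le_power2[of c] by linarith
qed

lemma accel_le: "Z \<tau> \<le> z_crit \<Longrightarrow> accel \<tau> \<le> z_crit\<^sup>2"
proof -
  assume "Z \<tau> \<le> z_crit"
  define c where "c = clamp 0 z_max (Z \<tau>)"
  have c: "0 \<le> c" "c \<le> z_crit"
    using \<open>Z \<tau> \<le> z_crit\<close> z_crit_ge_1 z_crit_le_z_max by (auto simp: c_def clamp_real_eq)
  have "c powr (k - 1) * p (T \<tau>) \<le> 0"
    using p_bounds[of "T \<tau>"] p1_neg by (simp add: mult_nonneg_nonpos)
  moreover have "c\<^sup>2 \<le> z_crit\<^sup>2"
    using c by (simp add: power_mono)
  ultimately show ?thesis
    by (simp add: accel_def flip: c_def)
qed

lemma accel_le_neg: "z_crit \<le> Z \<tau> \<Longrightarrow> accel \<tau> \<le> - \<kappa>"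
proof -
  assume "z_crit \<le> Z \<tau>"
  define c where "c = clamp 0 z_max (Z \<tau>)"
  have c: "z_crit \<le> c"
    using \<open>z_crit \<le> Z \<tau>\<close> z_crit_ge_1 z_crit_le_z_max by (auto simp: c_def clamp_real_eq)
  have "c powr (k - 1) * p (T \<tau>) \<le> c powr (k - 1) * (- g_low)"
    using g_bounds(1)[of "T \<tau>"] by (intro mult_left_mono) auto
  moreover have "c\<^sup>2 \<le> g_low / 2 * c powr (k - 1)"
    using square_le_gravity c by simp
  moreover have "g_low / 2 * z_crit powr (k - 1) \<le> g_low / 2 * c powr (k - 1)"
    using c z_crit_ge_1 k_gt_3 g_low_pos by (intro mult_left_mono powr_mono2) auto
  ultimately have "accel \<tau> \<le> - (g_low / 2) * z_crit powr (k - 1)"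
    unfolding accel_def c_def[symmetric] by (simp add: algebra_simps)
  then show ?thesis
    by (simp add: \<kappa>_def)
qed

lemma rise_bounds_upto:
  assumes "s \<le> rise_time" and below: "\<And>\<tau>. 0 \<le> \<tau> \<Longrightarrow> \<tau> \<le> s \<Longrightarrow> Z \<tau> \<le> z_crit"
    and "0 \<le> \<tau>" "\<tau> \<le> s"
  shows "v / 2 \<le> W \<tau>" "W \<tau> \<le> v + z_crit\<^sup>2 * \<tau>" "v * \<tau> / (2 * k) \<le> Z \<tau>"
proof -
  have W_lower: "v / 2 \<le> W x" if "0 \<le> x" "x \<le> s" for x
  proof -
    have "- g_high * z_crit powr (k - 1) * (x - 0) \<le> W x - W 0"
      by (rule DERIV_ge_imp_diff_ge[OF \<open>0 \<le> x\<close> W_cont W_deriv accel_ge]) (use below that in auto)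
    moreover have "g_high * z_crit powr (k - 1) * x \<le> g_high * z_crit powr (k - 1) * rise_time"
      using that \<open>s \<le> rise_time\<close> g_high_pos by (intro mult_left_mono) auto
    ultimately show ?thesis
      using rise_time_bound W_0 by simp
  qed
  then show "v / 2 \<le> W \<tau>"
    using assms by simp
  have "W \<tau> - W 0 \<le> z_crit\<^sup>2 * (\<tau> - 0)"
    by (rule DERIV_le_imp_diff_le[OF \<open>0 \<le> \<tau>\<close> W_cont W_deriv accel_le]) (use below assms in auto)
  then show "W \<tau> \<le> v + z_crit\<^sup>2 * \<tau>"
    using W_0 by simp
  have "v / (2 * k) * (\<tau> - 0) \<le> Z \<tau> - Z 0"
  proof (rule DERIV_ge_imp_diff_ge[OF \<open>0 \<le> \<tau>\<close> Z_cont Z_deriv])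
    fix x assume "0 < x" "x < \<tau>"
    then have "v / 2 \<le> W x"
      using W_lower assms by simp
    then show "v / (2 * k) \<le> W x / k"
      using k_gt_3 by (simp add: field_simps)
  qed simp_all
  then show "v * \<tau> / (2 * k) \<le> Z \<tau>"
    using Z_0 by simp
qed

lemma exists_rise:
  "\<exists>t. 0 < t \<and> t \<le> rise_time \<and> Z t = z_crit \<and> (\<forall>\<tau>. 0 \<le> \<tau> \<and> \<tau> \<le> t \<longrightarrow> Z \<tau> \<le> z_crit)"
proof -
  have "\<exists>\<tau>. 0 \<le> \<tau> \<and> \<tau> \<le> rise_time \<and> z_crit \<le> Z \<tau>"
  proof (rule ccontr)
    assume none: "\<not> ?thesis"
    then have "Z \<tau> \<le> z_crit" if "0 \<le> \<tau>" "\<tau> \<le> rise_time" for \<tau>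
      using that by force
    then have "v * rise_time / (2 * k) \<le> Z rise_time"
      using rise_bounds_upto(3)[OF order_refl] rise_time_pos by simp
    moreover have "v * rise_time / (2 * k) = z_crit"
      using v_pos k_gt_3 by (simp add: rise_time_def)
    ultimately show False
      using none rise_time_pos by auto
  qed
  then obtain \<tau>' where "0 \<le> \<tau>'" "\<tau>' \<le> rise_time" "z_crit \<le> Z \<tau>'"
    by blast
  moreover have "Z 0 < z_crit"
    using Z_0 z_crit_ge_1 by simp
  ultimately obtain t where "0 < t" "t \<le> \<tau>'" "Z t = z_crit" "\<And>s. 0 \<le> s \<Longrightarrow> s < t \<Longrightarrow> Z s < z_crit"
    using first_crossing_up[of 0 \<tau>' Z z_crit] Z_cont by blast
  with \<open>\<tau>' \<le> rise_time\<close> show ?thesis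
    by (intro exI[of _ t]) (auto simp: le_less)
qed

definition "t_rise = (SOME t. 0 < t \<and> t \<le> rise_time \<and> Z t = z_crit \<and> (\<forall>\<tau>. 0 \<le> \<tau> \<and> \<tau> \<le> t \<longrightarrow> Z \<tau> \<le> z_crit))"

lemma t_rise: "0 < t_rise" "t_rise \<le> rise_time" "Z t_rise = z_crit"
  "\<And>\<tau>. 0 \<le> \<tau> \<Longrightarrow> \<tau> \<le> t_rise \<Longrightarrow> Z \<tau> \<le> z_crit"
  using someI_ex[OF exists_rise] unfolding t_rise_def[symmetric] by auto

lemma rise_bounds:
  assumes "0 \<le> \<tau>" "\<tau> \<le> t_rise"
  shows "v / 2 \<le> W \<tau>" "W \<tau> \<le> w_rise" "v * \<tau> / (2 * k) \<le> Z \<tau>" "Z \<tau> \<le> z_crit"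
proof -
  note bounds = rise_bounds_upto[OF t_rise(2) t_rise(4) assms]
  show "v / 2 \<le> W \<tau>" "v * \<tau> / (2 * k) \<le> Z \<tau>" "Z \<tau> \<le> z_crit"
    using bounds t_rise(4) assms by auto
  have "v + z_crit\<^sup>2 * \<tau> \<le> w_rise"
    using assms t_rise(2) unfolding w_rise_def by (intro add_left_mono mult_left_mono) auto
  with bounds show "W \<tau> \<le> w_rise"
    by simp
qed

lemma Z_pos_rise:
  assumes "0 < \<tau>" "\<tau> \<le> t_rise"
  shows "0 < Z \<tau>"
proof -
  have "0 < v * \<tau> / (2 * k)"
    using assms v_pos k_gt_3 by simp
  then show ?thesis
    using rise_bounds(3)[of \<tau>] assms by simp
qed

lemma ascent_bounds_upto:
  assumes "t_rise \<le> s" and rising: "\<And>\<tau>. t_rise \<le> \<tau> \<Longrightarrow> \<tau> < s \<Longrightarrow> 0 < W \<tau>"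
    and "t_rise \<le> \<tau>" "\<tau> \<le> s"
  shows "z_crit \<le> Z \<tau>" "W \<tau> \<le> W t_rise - \<kappa> * (\<tau> - t_rise)" "Z \<tau> \<le> z_crit + w_rise * (\<tau> - t_rise) / k"
proof -
  have Z_ge: "z_crit \<le> Z x" if "t_rise \<le> x" "x \<le> s" for x
  proof -
    have "0 * (x - t_rise) \<le> Z x - Z t_rise"
      by (rule DERIV_ge_imp_diff_ge[OF \<open>t_rise \<le> x\<close> Z_cont Z_deriv])
         (use t_rise(1) rising that k_gt_3 in \<open>auto intro: less_imp_le\<close>)
    then show ?thesis
      using t_rise(3) by simp
  qed
  then show "z_crit \<le> Z \<tau>"
    using assms by simp
  have W_le: "W x - W t_rise \<le> - \<kappa> * (x - t_rise)" if "t_rise \<le> x" "x \<le> s" for x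
    by (rule DERIV_le_imp_diff_le[OF \<open>t_rise \<le> x\<close> W_cont W_deriv accel_le_neg])
       (use t_rise(1) that Z_ge in auto)
  from W_le[OF assms(3,4)] show "W \<tau> \<le> W t_rise - \<kappa> * (\<tau> - t_rise)"
    by simp
  have "Z \<tau> - Z t_rise \<le> w_rise / k * (\<tau> - t_rise)"
  proof (rule DERIV_le_imp_diff_le[OF \<open>t_rise \<le> \<tau>\<close> Z_cont Z_deriv])
    fix x assume "t_rise < x" "x < \<tau>"
    then have "W x - W t_rise \<le> - \<kappa> * (x - t_rise)" "0 \<le> \<kappa> * (x - t_rise)"
      using W_le[of x] \<kappa>_pos assms by auto
    then have "W x \<le> W t_rise"
      by linarith
    also have "\<dots> \<le> w_rise"
      using rise_bounds(2)[of t_rise] t_rise by simp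
    finally show "W x / k \<le> w_rise / k"
      using k_gt_3 by (simp add: divide_right_mono)
  qed (use t_rise in auto)
  then show "Z \<tau> \<le> z_crit + w_rise * (\<tau> - t_rise) / k"
    using t_rise(3) by simp
qed

lemma exists_apex:
  "\<exists>t. t_rise < t \<and> t \<le> t_rise + ascent_time \<and> W t = 0 \<and> (\<forall>\<tau>. t_rise \<le> \<tau> \<and> \<tau> < t \<longrightarrow> 0 < W \<tau>)"
proof -
  have "0 < W t_rise"
    using rise_bounds(1)[of t_rise] t_rise v_pos by simp
  have "\<exists>\<tau>. t_rise \<le> \<tau> \<and> \<tau> \<le> t_rise + ascent_time \<and> W \<tau> \<le> 0"
  proof (rule ccontr)
    assume "\<not> ?thesis"
    then have pos: "0 < W \<tau>" if "t_rise \<le> \<tau>" "\<tau> \<le> t_rise + ascent_time" for \<tau>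
      using that by force
    then have "W (t_rise + ascent_time) \<le> W t_rise - \<kappa> * ascent_time"
      using ascent_bounds_upto(2)[of "t_rise + ascent_time" "t_rise + ascent_time"] ascent_time_pos by simp
    also have "\<dots> \<le> w_rise - \<kappa> * ascent_time"
      using rise_bounds(2)[of t_rise] t_rise by simp
    also have "\<dots> = - \<kappa>"
      using \<kappa>_pos by (simp add: ascent_time_def field_simps)
    finally show False
      using pos[of "t_rise + ascent_time"] ascent_time_pos \<kappa>_pos by simp
  qed
  then obtain \<tau>' where "t_rise \<le> \<tau>'" "\<tau>' \<le> t_rise + ascent_time" "W \<tau>' \<le> 0"
    by blast
  moreover obtain t where "t_rise < t" "t \<le> \<tau>'" "W t = 0" "\<And>s. t_rise \<le> s \<Longrightarrow> s < t \<Longrightarrow> 0 < W s"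
    using first_crossing_down[of t_rise \<tau>' W 0] calculation \<open>0 < W t_rise\<close> W_cont t_rise(1) by auto
  ultimately show ?thesis
    by (intro exI[of _ t]) auto
qed

definition "t_apex = (SOME t. t_rise < t \<and> t \<le> t_rise + ascent_time \<and> W t = 0 \<and>
  (\<forall>\<tau>. t_rise \<le> \<tau> \<and> \<tau> < t \<longrightarrow> 0 < W \<tau>))"

lemma t_apex: "t_rise < t_apex" "t_apex \<le> t_rise + ascent_time" "W t_apex = 0"
  "\<And>\<tau>. t_rise \<le> \<tau> \<Longrightarrow> \<tau> < t_apex \<Longrightarrow> 0 < W \<tau>"
  using someI_ex[OF exists_apex] unfolding t_apex_def[symmetric] by auto

lemma t_apex_pos: "0 < t_apex"
  using t_rise t_apex by simp

lemma ascent_bounds: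
  assumes "t_rise \<le> \<tau>" "\<tau> \<le> t_apex"
  shows "z_crit \<le> Z \<tau>" "Z \<tau> \<le> z_max" "0 \<le> W \<tau>"
proof -
  note bounds = ascent_bounds_upto[OF _ t_apex(4) assms]
  show "z_crit \<le> Z \<tau>"
    using bounds t_apex by simp
  have "Z \<tau> \<le> z_crit + w_rise * (\<tau> - t_rise) / k"
    using bounds t_apex by simp
  also have "\<dots> \<le> z_crit + w_rise * ascent_time / k"
    using assms t_apex w_rise_pos k_gt_3 by (intro add_left_mono divide_right_mono mult_left_mono) auto
  finally show "Z \<tau> \<le> z_max"
    by (simp add: z_max_def)
  show "0 \<le> W \<tau>"
    using t_apex assms by (cases "\<tau> = t_apex") (auto simp: less_imp_le)
qed

text \<open>In the original variables \<open>u = Z powr k\<close>, \<open>u' = W\<close> this is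
  \<open>u'\<^sup>2 / 2 - u powr (1 - \<alpha>) / (1 - \<alpha>) + c u\<close>, whose time derivative is \<open>u' (p t + c)\<close>.\<close>
definition "energy c \<tau> = (W \<tau>)\<^sup>2 / 2 - (Z \<tau>)^3 / (1 - \<alpha>) + c * Z \<tau> powr k"

lemma energy_has_derivative:
  assumes "0 < \<tau>" "0 < Z \<tau>" "Z \<tau> \<le> z_max"
  shows "(energy c has_real_derivative W \<tau> * Z \<tau> powr (k - 1) * (p (T \<tau>) + c)) (at \<tau>)"
proof -
  have accel: "accel \<tau> = Z \<tau> powr (k - 1) * p (T \<tau>) + (Z \<tau>)\<^sup>2"
    using assms by (simp add: accel_def clamp_real_eq)
  have d1: "((\<lambda>\<tau>. (W \<tau>)\<^sup>2) has_real_derivative of_nat 2 * (accel \<tau> * (W \<tau>) ^ (2 - Suc 0))) (at \<tau>)"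
    by (rule DERIV_power[OF W_deriv[OF \<open>0 < \<tau>\<close>]])
  have d2: "((\<lambda>\<tau>. (Z \<tau>) ^ 3) has_real_derivative of_nat 3 * (W \<tau> / k * (Z \<tau>) ^ (3 - Suc 0))) (at \<tau>)"
    by (rule DERIV_power[OF Z_deriv[OF \<open>0 < \<tau>\<close>]])
  have d3: "((\<lambda>\<tau>. Z \<tau> powr k) has_real_derivative k * Z \<tau> powr (k - 1) * (W \<tau> / k)) (at \<tau>)"
    using DERIV_chain2[OF has_real_derivative_powr[OF \<open>0 < Z \<tau>\<close>] Z_deriv[OF \<open>0 < \<tau>\<close>]] .
  have "(energy c has_real_derivative of_nat 2 * (accel \<tau> * (W \<tau>) ^ (2 - Suc 0)) / 2
      - of_nat 3 * (W \<tau> / k * (Z \<tau>) ^ (3 - Suc 0)) / (1 - \<alpha>) + c * (k * Z \<tau> powr (k - 1) * (W \<tau> / k))) (at \<tau>)"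
    unfolding energy_def by (intro DERIV_add DERIV_diff DERIV_cmult DERIV_cdivide d1 d2 d3)
  moreover have "of_nat 2 * (accel \<tau> * (W \<tau>) ^ (2 - Suc 0)) / 2
      - of_nat 3 * (W \<tau> / k * (Z \<tau>) ^ (3 - Suc 0)) / (1 - \<alpha>) + c * (k * Z \<tau> powr (k - 1) * (W \<tau> / k))
      = W \<tau> * Z \<tau> powr (k - 1) * (p (T \<tau>) + c)"
  proof -
    have "of_nat 3 * (W \<tau> / k * (Z \<tau>) ^ (3 - Suc 0)) / (1 - \<alpha>) = 3 / (k * (1 - \<alpha>)) * (W \<tau> * (Z \<tau>)\<^sup>2)"
      using alpha_less_1 k_gt_3 by (simp add: field_simps)
    also have "\<dots> = W \<tau> * (Z \<tau>)\<^sup>2"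
      using k_mult by simp
    finally have "of_nat 3 * (W \<tau> / k * (Z \<tau>) ^ (3 - Suc 0)) / (1 - \<alpha>) = W \<tau> * (Z \<tau>)\<^sup>2" .
    moreover have "of_nat 2 * (accel \<tau> * (W \<tau>) ^ (2 - Suc 0)) / 2 = W \<tau> * (Z \<tau> powr (k - 1) * p (T \<tau>) + (Z \<tau>)\<^sup>2)"
      by (simp add: accel)
    moreover have "c * (k * Z \<tau> powr (k - 1) * (W \<tau> / k)) = c * Z \<tau> powr (k - 1) * W \<tau>"
      using k_gt_3 by simp
    ultimately show ?thesis
      using k_gt_3 by (simp add: algebra_simps)
  qed
  ultimately show ?thesis
    by simp
qed

lemma energy_mono:
  assumes "0 \<le> s1" "s1 \<le> s2"
    and inner: "\<And>\<tau>. s1 < \<tau> \<Longrightarrow> \<tau> < s2 \<Longrightarrow> 0 < Z \<tau> \<and> Z \<tau> \<le> z_max \<and> 0 \<le> W \<tau> * (p (T \<tau>) + c)"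
    and nonneg: "\<And>\<tau>. s1 \<le> \<tau> \<Longrightarrow> \<tau> \<le> s2 \<Longrightarrow> 0 \<le> Z \<tau>"
  shows "energy c s1 \<le> energy c s2"
proof -
  have cont_powr: "continuous_on {s1..s2} (\<lambda>\<tau>. Z \<tau> powr k)"
    using nonneg k_gt_3 by (intro continuous_on_powr' Z_cont[OF \<open>0 \<le> s1\<close>] continuous_on_const) auto
  have "continuous_on {s1..s2} (energy c)"
    unfolding energy_def using alpha_less_1
    by (intro continuous_intros cont_powr W_cont[OF \<open>0 \<le> s1\<close>] Z_cont[OF \<open>0 \<le> s1\<close>]) auto
  then have "0 * (s2 - s1) \<le> energy c s2 - energy c s1"
  proof (rule DERIV_ge_imp_diff_ge[OF \<open>s1 \<le> s2\<close>])
    fix \<tau> assume "s1 < \<tau>" "\<tau> < s2"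
    with inner[OF this] \<open>0 \<le> s1\<close> show
      "(energy c has_real_derivative W \<tau> * Z \<tau> powr (k - 1) * (p (T \<tau>) + c)) (at \<tau>)"
      by (intro energy_has_derivative) auto
    have "0 \<le> Z \<tau> powr (k - 1) * (W \<tau> * (p (T \<tau>) + c))"
      using inner[OF \<open>s1 < \<tau>\<close> \<open>\<tau> < s2\<close>] by simp
    then show "0 \<le> W \<tau> * Z \<tau> powr (k - 1) * (p (T \<tau>) + c)"
      by (simp add: algebra_simps)
  qed
  then show ?thesis
    by simp
qed

lemma apex_energy: "v\<^sup>2 / 2 \<le> g_high * Z t_apex powr k"
proof -
  have "energy g_high 0 \<le> energy g_high t_apex"
  proof (rule energy_mono)
    fix \<tau> assume \<tau>: "0 < \<tau>" "\<tau> < t_apex"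
    show "0 < Z \<tau> \<and> Z \<tau> \<le> z_max \<and> 0 \<le> W \<tau> * (p (T \<tau>) + g_high)"
    proof (cases "\<tau> \<le> t_rise")
      case True
      then show ?thesis
        using Z_pos_rise[OF \<tau>(1)] rise_bounds[of \<tau>] \<tau> z_crit_le_z_max v_pos g_bounds(2)[of "T \<tau>"] by auto
    next
      case False
      then show ?thesis
        using ascent_bounds[of \<tau>] \<tau> z_crit_ge_1 g_bounds(2)[of "T \<tau>"] by auto
    qed
  next
    fix \<tau> assume "0 \<le> \<tau>" "\<tau> \<le> t_apex"
    then show "0 \<le> Z \<tau>"
      using Z_pos_rise[of \<tau>] ascent_bounds[of \<tau>] Z_0 z_crit_ge_1 by (cases "\<tau> \<le> t_rise") (auto simp: le_less)
  qed (use t_apex_pos in auto)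
  moreover have "energy g_high 0 = v\<^sup>2 / 2"
    using Z_0 W_0 k_gt_3 by (simp add: energy_def)
  moreover have "energy g_high t_apex \<le> g_high * Z t_apex powr k"
    using ascent_bounds[of t_apex] t_apex z_crit_ge_1 alpha_less_1 by (simp add: energy_def)
  ultimately show ?thesis
    by simp
qed

lemma z_apex_le_apex: "z_apex \<le> Z t_apex"
proof (rule ccontr)
  assume "\<not> ?thesis"
  moreover have "0 \<le> Z t_apex"
    using ascent_bounds[of t_apex] t_apex z_crit_ge_1 by simp
  ultimately have "Z t_apex powr k < z_apex powr k"
    using k_gt_3 by (intro powr_less_mono2) auto
  then have "g_high * Z t_apex powr k < g_high * z_apex powr k"
    using g_high_pos by simp
  then show False
    using apex_energy v_large_apex by simp
qed

lemma apex_height: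
  "z_crit < Z t_apex" "2 / (g_low * (1 - \<alpha>)) \<le> Z t_apex powr (k - 3)"
  "4 * z_crit powr k \<le> Z t_apex powr k" "Z t_apex \<le> z_max"
proof -
  have z_apex: "4 * z_crit \<le> z_apex" "(2 / (g_low * (1 - \<alpha>))) powr (1 / (k - 3)) \<le> z_apex"
    by (auto simp: z_apex_def)
  then show "z_crit < Z t_apex"
    using z_apex_le_apex z_crit_ge_1 by simp
  show "2 / (g_low * (1 - \<alpha>)) \<le> Z t_apex powr (k - 3)"
    using z_apex z_apex_le_apex g_low_pos alpha_less_1 k_gt_3 by (intro le_powr_of_root_le) auto
  have "4 * z_crit powr k \<le> 4 powr k * z_crit powr k"
    using k_gt_3 powr_mono[of 1 k 4] by (intro mult_right_mono) auto
  also have "\<dots> = (4 * z_crit) powr k"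
    using z_crit_ge_1 by (simp add: powr_mult)
  also have "\<dots> \<le> Z t_apex powr k"
    using z_apex z_apex_le_apex z_crit_ge_1 k_gt_3 by (intro powr_mono2) auto
  finally show "4 * z_crit powr k \<le> Z t_apex powr k" .
  show "Z t_apex \<le> z_max"
    using ascent_bounds[of t_apex] t_apex by simp
qed

lemma energy_apex_ge: "g_low * Z t_apex powr k / 2 \<le> energy g_low t_apex"
proof -
  define z where "z = Z t_apex"
  have "0 < z"
    using apex_height(1) z_crit_ge_1 by (simp add: z_def)
  have "z powr k = z powr (k - 3) * z powr 3"
    by (simp flip: powr_add)
  also have "z powr 3 = z ^ 3"
    using \<open>0 < z\<close> by (simp add: powr_numeral)
  finally have z_powr: "z powr k = z powr (k - 3) * z ^ 3" .
  have "z ^ 3 / (1 - \<alpha>) = 2 / (g_low * (1 - \<alpha>)) * z ^ 3 * (g_low / 2)"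
    using g_low_pos alpha_less_1 by (simp add: field_simps)
  also have "\<dots> \<le> z powr (k - 3) * z ^ 3 * (g_low / 2)"
    using apex_height(2) \<open>0 < z\<close> g_low_pos by (intro mult_right_mono) (auto simp: z_def)
  also have "\<dots> = g_low * z powr k / 2"
    by (simp add: z_powr)
  finally show ?thesis
    using t_apex by (simp add: energy_def flip: z_def)
qed

lemma fall_bounds_upto:
  assumes "t_apex \<le> s" and above: "\<And>\<tau>. t_apex \<le> \<tau> \<Longrightarrow> \<tau> \<le> s \<Longrightarrow> z_crit \<le> Z \<tau>"
    and "t_apex \<le> \<tau>" "\<tau> \<le> s"
  shows "W \<tau> \<le> - \<kappa> * (\<tau> - t_apex)" "Z \<tau> \<le> Z t_apex"
proof -
  have W_le: "W x \<le> - \<kappa> * (x - t_apex)" if "t_apex \<le> x" "x \<le> s" for x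
  proof -
    have "W x - W t_apex \<le> - \<kappa> * (x - t_apex)"
      by (rule DERIV_le_imp_diff_le[OF \<open>t_apex \<le> x\<close> W_cont W_deriv accel_le_neg])
         (use t_apex_pos that above in auto)
    then show ?thesis
      using t_apex(3) by simp
  qed
  from W_le[OF assms(3,4)] show "W \<tau> \<le> - \<kappa> * (\<tau> - t_apex)" .
  have "Z \<tau> - Z t_apex \<le> 0 * (\<tau> - t_apex)"
  proof (rule DERIV_le_imp_diff_le[OF \<open>t_apex \<le> \<tau>\<close> Z_cont Z_deriv])
    fix x assume "t_apex < x" "x < \<tau>"
    then have "W x \<le> - \<kappa> * (x - t_apex)" "0 \<le> \<kappa> * (x - t_apex)"
      using W_le[of x] \<kappa>_pos assms by auto
    then have "W x \<le> 0"
      by linarith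
    then show "W x / k \<le> 0"
      using k_gt_3 by (simp add: divide_nonpos_pos)
  qed (use t_apex_pos in auto)
  then show "Z \<tau> \<le> Z t_apex"
    by simp
qed

lemma exists_fall: "\<exists>t. t_apex < t \<and> Z t = z_crit \<and> (\<forall>\<tau>. t_apex \<le> \<tau> \<and> \<tau> < t \<longrightarrow> z_crit < Z \<tau>)"
proof -
  define D where "D = 1 + k * z_max / \<kappa>"
  have "1 \<le> D"
    using k_gt_3 z_crit_le_z_max z_crit_ge_1 \<kappa>_pos by (simp add: D_def)
  have "\<exists>\<tau>. t_apex \<le> \<tau> \<and> \<tau> \<le> t_apex + D \<and> Z \<tau> \<le> z_crit"
  proof (rule ccontr)
    assume "\<not> ?thesis"
    then have above: "z_crit < Z \<tau>" if "t_apex \<le> \<tau>" "\<tau> \<le> t_apex + D" for \<tau>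
      using that by force
    then have above': "z_crit \<le> Z \<tau>" if "t_apex \<le> \<tau>" "\<tau> \<le> t_apex + D" for \<tau>
      using that less_imp_le by blast
    have "Z (t_apex + D) - Z (t_apex + 1) \<le> - \<kappa> / k * ((t_apex + D) - (t_apex + 1))"
    proof (rule DERIV_le_imp_diff_le[OF _ Z_cont Z_deriv])
      fix x assume x: "t_apex + 1 < x" "x < t_apex + D"
      have "W x \<le> - \<kappa> * (x - t_apex)"
        using fall_bounds_upto(1)[OF _ above', of "t_apex + D" x] x \<open>1 \<le> D\<close> by simp
      also have "\<dots> \<le> - \<kappa>"
        using x \<kappa>_pos mult_left_mono[of 1 "x - t_apex" \<kappa>] by simp
      finally show "W x / k \<le> - \<kappa> / k"
        using divide_right_mono[of "W x" "- \<kappa>" k] k_gt_3 by simp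
    qed (use t_apex_pos \<open>1 \<le> D\<close> in auto)
    moreover have "- \<kappa> / k * ((t_apex + D) - (t_apex + 1)) = - z_max"
      using \<kappa>_pos k_gt_3 by (simp add: D_def)
    moreover have "Z (t_apex + 1) \<le> Z t_apex"
      using fall_bounds_upto(2)[OF _ above', of "t_apex + D" "t_apex + 1"] \<open>1 \<le> D\<close> by simp
    moreover have "z_crit < Z (t_apex + D)"
      using above \<open>1 \<le> D\<close> by simp
    ultimately show False
      using apex_height(4) z_crit_ge_1 by simp
  qed
  then obtain \<tau>' where \<tau>': "t_apex \<le> \<tau>'" "Z \<tau>' \<le> z_crit"
    by blast
  obtain t where "t_apex < t" "Z t = z_crit" "\<And>s. t_apex \<le> s \<Longrightarrow> s < t \<Longrightarrow> z_crit < Z s"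
  proof (rule first_crossing_down[OF \<tau>'(1) Z_cont[OF less_imp_le[OF t_apex_pos]] apex_height(1) \<tau>'(2)])
    fix t assume "t_apex < t" "Z t = z_crit" "\<And>s. t_apex \<le> s \<Longrightarrow> s < t \<Longrightarrow> z_crit < Z s"
    then show thesis
      by (rule that)
  qed
  then show ?thesis
    by blast
qed

definition "t_fall = (SOME t. t_apex < t \<and> Z t = z_crit \<and> (\<forall>\<tau>. t_apex \<le> \<tau> \<and> \<tau> < t \<longrightarrow> z_crit < Z \<tau>))"

lemma t_fall: "t_apex < t_fall" "Z t_fall = z_crit" "\<And>\<tau>. t_apex \<le> \<tau> \<Longrightarrow> \<tau> < t_fall \<Longrightarrow> z_crit < Z \<tau>"
  using someI_ex[OF exists_fall] unfolding t_fall_def[symmetric] by auto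

lemma fall_bounds:
  assumes "t_apex \<le> \<tau>" "\<tau> \<le> t_fall"
  shows "z_crit \<le> Z \<tau>" "Z \<tau> \<le> z_max" "W \<tau> \<le> 0"
proof -
  have above: "z_crit \<le> Z x" if "t_apex \<le> x" "x \<le> t_fall" for x
    using t_fall that by (cases "x = t_fall") (auto intro: less_imp_le)
  then show "z_crit \<le> Z \<tau>"
    using assms by simp
  show "Z \<tau> \<le> z_max"
    using fall_bounds_upto(2)[OF _ above assms] t_fall apex_height(4) by simp
  have "W \<tau> \<le> - \<kappa> * (\<tau> - t_apex)"
    using fall_bounds_upto(1)[OF _ above assms] t_fall by simp
  also have "\<dots> \<le> 0"
    using \<kappa>_pos assms by simp
  finally show "W \<tau> \<le> 0" .
qed

lemma landing_speed_sq:
  assumes "t_apex \<le> \<tau>" and inner: "\<And>x. t_apex < x \<Longrightarrow> x < \<tau> \<Longrightarrow> 0 < Z x \<and> Z x \<le> z_max \<and> W x \<le> 0"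
    and nonneg: "\<And>x. t_apex \<le> x \<Longrightarrow> x \<le> \<tau> \<Longrightarrow> 0 \<le> Z x" and "Z \<tau> \<le> z_crit"
  shows "w_land\<^sup>2 \<le> (W \<tau>)\<^sup>2"
proof -
  have "energy g_low t_apex \<le> energy g_low \<tau>"
  proof (rule energy_mono[OF less_imp_le[OF t_apex_pos] \<open>t_apex \<le> \<tau>\<close> _ nonneg])
    fix x assume x: "t_apex < x" "x < \<tau>"
    have "p (T x) + g_low \<le> 0"
      using g_bounds(1)[of "T x"] by simp
    then show "0 < Z x \<and> Z x \<le> z_max \<and> 0 \<le> W x * (p (T x) + g_low)"
      using inner[OF x] by (simp add: mult_nonpos_nonpos)
  qed
  moreover have "energy g_low \<tau> \<le> (W \<tau>)\<^sup>2 / 2 + g_low * z_crit powr k"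
  proof -
    have "0 \<le> Z \<tau>"
      using nonneg \<open>t_apex \<le> \<tau>\<close> by simp
    then have "Z \<tau> powr k \<le> z_crit powr k" "0 \<le> Z \<tau> ^ 3 / (1 - \<alpha>)"
      using \<open>Z \<tau> \<le> z_crit\<close> k_gt_3 alpha_less_1 by (auto intro: powr_mono2)
    moreover have "g_low * Z \<tau> powr k \<le> g_low * z_crit powr k"
      using calculation(1) g_low_pos by simp
    ultimately show ?thesis
      by (simp add: energy_def)
  qed
  moreover have "4 * (g_low * z_crit powr k) \<le> g_low * Z t_apex powr k"
    using apex_height(3) g_low_pos by simp
  ultimately have "g_low * Z t_apex powr k / 2 \<le> (W \<tau>)\<^sup>2"
    using energy_apex_ge by simp
  moreover have "g_low * v\<^sup>2 / (4 * g_high) \<le> g_low * Z t_apex powr k / 2"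
  proof -
    have "v\<^sup>2 / (2 * g_high) \<le> Z t_apex powr k"
      using apex_energy g_high_pos by (simp add: field_simps)
    then have "g_low * (v\<^sup>2 / (2 * g_high)) \<le> g_low * Z t_apex powr k"
      using g_low_pos by (intro mult_left_mono) auto
    then show ?thesis
      by (simp add: field_simps)
  qed
  ultimately show ?thesis
    using w_land_sq by simp
qed

lemma W_le_of_landing_speed_sq: "w_land\<^sup>2 \<le> (W \<tau>)\<^sup>2 \<Longrightarrow> W \<tau> \<le> 0 \<Longrightarrow> W \<tau> \<le> - w_land"
  using power2_le_imp_le[of w_land "- W \<tau>"] by simp

lemma W_t_fall: "W t_fall \<le> - w_land"
proof (rule W_le_of_landing_speed_sq)
  show "w_land\<^sup>2 \<le> (W t_fall)\<^sup>2"
  proof (rule landing_speed_sq)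
    fix x assume "t_apex < x" "x < t_fall"
    then show "0 < Z x \<and> Z x \<le> z_max \<and> W x \<le> 0"
      using fall_bounds[of x] z_crit_ge_1 by auto
  next
    fix x assume "t_apex \<le> x" "x \<le> t_fall"
    then show "0 \<le> Z x"
      using fall_bounds(1)[of x] z_crit_ge_1 by auto
  qed (use t_fall in auto)
  show "W t_fall \<le> 0"
    using fall_bounds(3)[of t_fall] t_fall by simp
qed

text \<open>The landing time is the first zero of this margin: until then the orbit stays above the
  collision and falls at speed more than \<open>w_land / 2\<close>, so the landing happens in finite time.\<close>
definition "descent_margin \<tau> = min (Z \<tau>) (- W \<tau> - w_land / 2)"

lemma exists_landing:
  "\<exists>t. t_fall < t \<and> descent_margin t = 0 \<and> (\<forall>\<tau>. t_fall \<le> \<tau> \<and> \<tau> < t \<longrightarrow> 0 < descent_margin \<tau>)"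
proof -
  have "0 \<le> t_fall"
    using t_fall t_apex_pos by simp
  have cont: "continuous_on {t_fall..b} descent_margin" for b
    unfolding descent_margin_def by (intro continuous_intros Z_cont W_cont \<open>0 \<le> t_fall\<close>)
  have "0 < descent_margin t_fall"
    using W_t_fall t_fall z_crit_ge_1 w_land_pos by (simp add: descent_margin_def)
  define D where "D = 2 * k * z_crit / w_land + 1"
  have "0 < D"
    using k_gt_3 z_crit_ge_1 w_land_pos by (simp add: D_def add_pos_nonneg)
  have "\<exists>\<tau>. t_fall \<le> \<tau> \<and> \<tau> \<le> t_fall + D \<and> descent_margin \<tau> \<le> 0"
  proof (rule ccontr)
    assume "\<not> ?thesis"
    then have pos: "0 < descent_margin \<tau>" if "t_fall \<le> \<tau>" "\<tau> \<le> t_fall + D" for \<tau>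
      using that by force
    have "Z (t_fall + D) - Z t_fall \<le> - w_land / (2 * k) * ((t_fall + D) - t_fall)"
    proof (rule DERIV_le_imp_diff_le[OF _ Z_cont[OF \<open>0 \<le> t_fall\<close>] Z_deriv])
      fix x assume "t_fall < x" "x < t_fall + D"
      then have "W x < - w_land / 2"
        using pos[of x] by (simp add: descent_margin_def)
      then show "W x / k \<le> - w_land / (2 * k)"
        using k_gt_3 by (simp add: field_simps)
    qed (use \<open>0 \<le> t_fall\<close> \<open>0 < D\<close> in auto)
    moreover have "- w_land / (2 * k) * ((t_fall + D) - t_fall) = - z_crit - w_land / (2 * k)"
      using w_land_pos k_gt_3 by (simp add: D_def field_simps)
    moreover have "0 < Z (t_fall + D)"
      using pos[of "t_fall + D"] \<open>0 < D\<close> by (simp add: descent_margin_def)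
    moreover have "0 < w_land / (2 * k)"
      using w_land_pos k_gt_3 by simp
    ultimately show False
      using t_fall(2) by simp
  qed
  then obtain \<tau>' where \<tau>': "t_fall \<le> \<tau>'" "descent_margin \<tau>' \<le> 0"
    by blast
  obtain t where "t_fall < t" "descent_margin t = 0" "\<And>s. t_fall \<le> s \<Longrightarrow> s < t \<Longrightarrow> 0 < descent_margin s"
  proof (rule first_crossing_down[OF \<tau>'(1) cont \<open>0 < descent_margin t_fall\<close> \<tau>'(2)])
    fix t assume "t_fall < t" "descent_margin t = 0" "\<And>s. t_fall \<le> s \<Longrightarrow> s < t \<Longrightarrow> 0 < descent_margin s"
    then show thesis
      by (rule that)
  qed
  then show ?thesis
    by blast
qed

definition "t_land = (SOME t. t_fall < t \<and> descent_margin t = 0 \<and>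
  (\<forall>\<tau>. t_fall \<le> \<tau> \<and> \<tau> < t \<longrightarrow> 0 < descent_margin \<tau>))"

lemma t_land: "t_fall < t_land" "descent_margin t_land = 0"
  "\<And>\<tau>. t_fall \<le> \<tau> \<Longrightarrow> \<tau> < t_land \<Longrightarrow> 0 < descent_margin \<tau>"
  using someI_ex[OF exists_landing] unfolding t_land_def[symmetric] by auto

lemma descent_bounds:
  assumes "t_fall \<le> \<tau>" "\<tau> < t_land"
  shows "0 < Z \<tau>" "W \<tau> < - w_land / 2"
  using t_land(3)[OF assms] by (auto simp: descent_margin_def)

lemma descent_below_crit:
  assumes "t_fall \<le> \<tau>" "\<tau> \<le> t_land"
  shows "Z \<tau> \<le> z_crit"
proof -
  have "Z \<tau> - Z t_fall \<le> 0 * (\<tau> - t_fall)"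
  proof (rule DERIV_le_imp_diff_le[OF assms(1) Z_cont Z_deriv])
    fix x assume "t_fall < x" "x < \<tau>"
    then have "W x < 0"
      using descent_bounds(2)[of x] assms w_land_pos by simp
    then show "W x / k \<le> 0"
      using k_gt_3 by (simp add: divide_nonpos_pos)
  qed (use t_fall t_apex_pos in auto)
  then show ?thesis
    using t_fall by simp
qed

lemma landing: "Z t_land = 0" "W t_land \<le> - w_land"
proof -
  have margin: "0 \<le> Z t_land" "0 \<le> - W t_land - w_land / 2"
    using t_land(2) by (auto simp: descent_margin_def min_def split: if_splits)
  have "w_land\<^sup>2 \<le> (W t_land)\<^sup>2"
  proof (rule landing_speed_sq)
    fix x assume "t_apex < x" "x < t_land"
    then show "0 < Z x \<and> Z x \<le> z_max \<and> W x \<le> 0"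
      using fall_bounds[of x] descent_bounds[of x] descent_below_crit[of x] z_crit_ge_1 z_crit_le_z_max w_land_pos
      by (cases "x \<le> t_fall") auto
  next
    fix x assume "t_apex \<le> x" "x \<le> t_land"
    then show "0 \<le> Z x"
      using fall_bounds(1)[of x] descent_bounds(1)[of x] margin z_crit_ge_1
      by (cases "x \<le> t_fall"; cases "x = t_land") auto
  qed (use t_fall t_land descent_below_crit[of t_land] in auto)
  moreover have "W t_land \<le> 0"
    using margin w_land_pos by simp
  ultimately show "W t_land \<le> - w_land"
    by (rule W_le_of_landing_speed_sq)
  then have "0 < - W t_land - w_land / 2"
    using w_land_pos by simp
  then show "Z t_land = 0"
    using t_land(2) margin by (auto simp: descent_margin_def min_def split: if_splits)
qed

lemma flight_height_bounds:
  assumes "0 < \<tau>" "\<tau> < t_land"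
  shows "0 < Z \<tau>" "Z \<tau> \<le> z_max"
proof -
  consider "\<tau> \<le> t_rise" | "t_rise \<le> \<tau>" "\<tau> \<le> t_apex" | "t_apex \<le> \<tau>" "\<tau> \<le> t_fall" | "t_fall \<le> \<tau>"
    by linarith
  then have "0 < Z \<tau> \<and> Z \<tau> \<le> z_max"
  proof cases
    case 1
    then show ?thesis
      using Z_pos_rise[OF assms(1)] rise_bounds(4)[of \<tau>] assms z_crit_le_z_max by simp
  next
    case 2
    then show ?thesis
      using ascent_bounds[of \<tau>] z_crit_ge_1 by simp
  next
    case 3
    then show ?thesis
      using fall_bounds[of \<tau>] z_crit_ge_1 by simp
  next
    case 4
    then show ?thesis
      using descent_bounds(1)[of \<tau>] descent_below_crit[of \<tau>] assms z_crit_le_z_max by simp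
  qed
  then show "0 < Z \<tau>" "Z \<tau> \<le> z_max"
    by auto
qed

lemma t_land_pos: "0 < t_land"
  using t_land t_fall t_apex_pos by simp

lemma flight_of_fast_takeoff: "\<exists>u du. flight \<alpha> p (T 0) (T t_land) u du v (- W t_land)"
proof -
  have "\<exists>u du. flight \<alpha> p (T 0) (T t_land) u du (W 0) (- W t_land)"
  proof (rule flight_of_regularized_orbit[OF alpha_pos alpha_less_1 k_mult t_land_pos T_cont Z_cont W_cont])
    fix \<tau> assume "0 < \<tau>" "\<tau> < t_land"
    then have "0 < Z \<tau>" "Z \<tau> \<le> z_max"
      by (rule flight_height_bounds)+
    then have "clamp 0 z_max (Z \<tau>) = Z \<tau>" "0 < Z \<tau>"
      by (simp_all add: clamp_Z_eq)
    with T_deriv[OF \<open>0 < \<tau>\<close>] Z_deriv[OF \<open>0 < \<tau>\<close>] W_deriv[OF \<open>0 < \<tau>\<close>]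
    show "(T has_real_derivative Z \<tau> powr (k - 1)) (at \<tau>)"
      "(Z has_real_derivative W \<tau> / k) (at \<tau>)"
      "(W has_real_derivative Z \<tau> powr (k - 1) * p (T \<tau>) + (Z \<tau>)\<^sup>2) (at \<tau>)" "0 < Z \<tau>"
      by (simp_all add: accel_def)
  qed (use Z_0 landing in auto)
  then show ?thesis
    using W_0 by simp
qed

end

lemma fast_flights:
  assumes "bouncing_setting \<alpha> p1 p2 p" and "\<exists>L. L-lipschitz_on UNIV p"
  shows "\<exists>V>0. \<forall>t0 v. V < v \<longrightarrow> (\<exists>t1 u du w. M < w \<and> flight \<alpha> p t0 t1 u du v w)"
proof -
  interpret bouncing_setting \<alpha> p1 p2 p
    by fact
  obtain Lp where Lp: "Lp-lipschitz_on UNIV p"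
    using assms(2) by blast
  define V where "V = 1 + sqrt (4 * k * g_high * z_crit powr k) + sqrt (2 * g_high * z_apex powr k)
    + 2 * max M 0 * sqrt (g_high / g_low)"
  have roots_nonneg: "0 \<le> sqrt (4 * k * g_high * z_crit powr k)" "0 \<le> sqrt (2 * g_high * z_apex powr k)"
    "0 \<le> 2 * max M 0 * sqrt (g_high / g_low)"
    using k_gt_3 g_high_pos g_low_pos by auto
  then have "0 < V"
    unfolding V_def by linarith
  have "\<exists>t1 u du w. M < w \<and> flight \<alpha> p t0 t1 u du v w" if "V < v" for t0 v
  proof -
    have v_large: "sqrt (4 * k * g_high * z_crit powr k) \<le> v" "sqrt (2 * g_high * z_apex powr k) \<le> v"
      "2 * max M 0 * sqrt (g_high / g_low) < v"
      using \<open>V < v\<close> roots_nonneg unfolding V_def by linarith+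
    interpret fast_takeoff \<alpha> p1 p2 p v
    proof
      show "0 < v"
        using \<open>0 < V\<close> \<open>V < v\<close> by simp
      show "4 * k * g_high * z_crit powr k \<le> v\<^sup>2" "2 * g_high * z_apex powr k \<le> v\<^sup>2"
        using v_large by (auto intro: sqrt_le_D)
    qed
    have "\<bar>p t\<bar> \<le> g_high" for t
      using g_bounds[of t] g_low_pos by auto
    then obtain L where L: "L-lipschitz_on UNIV (regularized_field k p z_max)"
      using lipschitz_regularized_field[OF _ _ Lp] k_gt_3 z_crit_le_z_max z_crit_ge_1 by force
    obtain X where "X 0 = (t0, 0, v)" "\<And>S. continuous_on {0..S} X"
      "\<And>\<tau>. 0 < \<tau> \<Longrightarrow> (X has_vector_derivative regularized_field k p z_max (X \<tau>)) (at \<tau>)"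
      using lipschitz_autonomous_ode_solution[OF L, of "(t0, 0, v)"] by blast
    then interpret regularized_flight \<alpha> p1 p2 p v X
      by unfold_locales auto
    obtain u du where "flight \<alpha> p (T 0) (T t_land) u du v (- W t_land)"
      using flight_of_fast_takeoff by blast
    moreover have "T 0 = t0"
      using \<open>X 0 = (t0, 0, v)\<close> by (simp add: T_def)
    moreover have "M < - W t_land"
      using less_w_land[OF _ v_large(3)] landing(2) by simp
    ultimately show ?thesis
      by blast
  qed
  with \<open>0 < V\<close> show ?thesis
    by blast
qed

theorem lemma3p4:
  fixes \<alpha> p1 p2 :: real and p :: "real \<Rightarrow> real"
  assumes "0 < \<alpha>" "\<alpha> < 1"
    and "\<exists>L. L-lipschitz_on UNIV p"
    and "p2 \<le> p1" "p1 < 0"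
    and "\<And>t. p2 \<le> p t \<and> p t \<le> p1"
  shows "\<forall>n::nat. \<exists>\<gamma>>0. \<forall>t0 v0. v0 > \<gamma> \<longrightarrow>
           (\<exists>u du t. bounces_n_times \<alpha> p1 p2 p t0 v0 n u du t)"
proof
  fix n :: nat
  have "bouncing_setting \<alpha> p1 p2 p"
    using assms by unfold_locales
  from bounces_n_times_of_flights[OF fast_flights[OF this assms(3)]]
  show "\<exists>\<gamma>>0. \<forall>t0 v0. v0 > \<gamma> \<longrightarrow> (\<exists>u du t. bounces_n_times \<alpha> p1 p2 p t0 v0 n u du t)"
    by blast
qed

end
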